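(* For the fully labeled one-dimensional rearrangement problem (LOR), with respect to the total cost $J_T(P)=Nc_p+\sum_{i=0}^N|p_i-p_{i+1}|\,c_t$ (any constants $c_p,c_t>0$): (i) SweepCyclesLOR computes globally optimal solutions in the asymptotic sense in expectation, i.e., for a uniformly random permutation $\pi$ of $\{1,\dots,m\}$, the ratio of the expected cost of the SweepCyclesLOR plan to the expected minimum of $J_T$ over all valid plans tends to $1$ as $m\to\infty$; and (ii) for every instance $\pi$, OptPlanLOR computes a valid plan minimizing $J_T$ over all valid plans.
   Context: Setting (LOR). A row of $m$ cells $1,\dots,m$, cell $i$ located at the point $i$ on the real line. Each cell initially holds exactly one item; items carry distinct labels $1,\dots,m$. An instance is a permutation $\pi$ of $\{1,\dots,m\}$, where $\pi_i$ is the label of the item initially in cell $i$; the goal is that item $i$ ends in cell $i$. A robot end-effector can hold at most one item; it starts at cell $1$ holding nothing. A pick-n-swap operation at a cell $p$: if holding nothing, pick up the item in $p$; if holding an item and $p$ contains an item, exchange the two; if holding an item and $p$ is empty, put the held item into $p$. A plan is a sequence $P=(p_0,p_1,\dots,p_N)$ of cells ($p_0=$ cell $1$) visited in order with a pick-n-swap at each of $p_1,\dots,p_N$, followed by a return to $p_{N+1}:=p_0$; it is valid if at the end every item $i$ is in cell $i$ and the end-effector holds nothing. SweepCyclesLOR: while some cell $i$ holds an item with label $\ne i$, let $i$ be the smallest such cell; go to $i$ and pick up its item, say label $g$; while $g\neq i$, go to cell $g$ and swap (item $g$ placed, the item previously in cell $g$, label $g'$, becomes held; $g:=g'$); finally go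 to cell $i$ and place the held item. When done, return to cell $1$. Cycles: the non-trivial cycles of $\pi$ (cell $i$ points to cell $\pi_i$); $\min(c),\max(c)$ the smallest/largest cell of cycle $c$, extended to sets of cycles. Cycle groups: repeatedly merge groups of cycles whose intervals $[\min,\max]$ intersect until pairwise disjoint. OptPlanLOR: groups are processed from left to right; in a group with cycles ordered by $\min$, follow the first cycle from its minimum cell by cycle following; whenever the end-effector carrying an item would pass over $\min(c')$ of the next not-yet-started cycle $c'$ of the group, it parks the carried item by swapping it into cell $\min(c')$, follows $c'$ (recursively with the same rule), retrieves the parked item when $c'$ closes and resumes; upon reaching the right end $\max(C)$ of the current group $C$, it first processes the groups to the right (recursively) and then returns to complete $C$; finally it returns to cell $1$. *)

theory Defs
  imports Complex_Main "HOL-Combinatorics.Permutations"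
begin

text \<open>A configuration: the content of every cell (None = empty) and the content of the
  end-effector (None = holding nothing).  Labels and cells are natural numbers 1..m.\<close>

type_synonym lstate = "(nat \<Rightarrow> nat option) \<times> nat option"

definition pns :: "nat \<Rightarrow> lstate \<Rightarrow> lstate" where
  "pns p s = (case snd s of
       None \<Rightarrow> ((fst s)(p := None), fst s p)
     | Some a \<Rightarrow> ((fst s)(p := Some a), fst s p))"

definition run :: "nat list \<Rightarrow> lstate \<Rightarrow> lstate" where
  "run ps s = fold pns ps s"

definition init :: "(nat \<Rightarrow> nat) \<Rightarrow> nat \<Rightarrow> lstate" where
  "init \<pi> m = ((\<lambda>i. if i \<in> {1..m} then Some (\<pi> i) else None), None)"

definition goal :: "nat \<Rightarrow> lstate" where
  "goal m = ((\<lambda>i. if i \<in> {1..m} then Some i else None), None)"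

text \<open>A plan is the list [p_1,...,p_N]; p_0 = 1 and p_(N+1) = p_0 are implicit.\<close>
definition valid_plan :: "nat \<Rightarrow> (nat \<Rightarrow> nat) \<Rightarrow> nat list \<Rightarrow> bool" where
  "valid_plan m \<pi> ps \<longleftrightarrow> set ps \<subseteq> {1..m} \<and> run ps (init \<pi> m) = goal m"

definition path_len :: "nat list \<Rightarrow> real" where
  "path_len xs = sum_list (map (\<lambda>(a,b). \<bar>real a - real b\<bar>) (zip xs (tl xs)))"

definition cost :: "real \<Rightarrow> real \<Rightarrow> nat list \<Rightarrow> real" where
  "cost cp ct ps = real (length ps) * cp + path_len (1 # ps @ [1]) * ct"

definition opt_cost :: "real \<Rightarrow> real \<Rightarrow> nat \<Rightarrow> (nat \<Rightarrow> nat) \<Rightarrow> real" where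
  "opt_cost cp ct m \<pi> = Inf {cost cp ct ps | ps. valid_plan m \<pi> ps}"

text \<open>Inner loop: holding label g; while g ~= i go to g and swap; finally go to i and place.
  The first argument is fuel (never exhausted for permutations).\<close>
fun sw_follow :: "nat \<Rightarrow> nat \<Rightarrow> lstate \<Rightarrow> nat list" where
  "sw_follow 0 i s = []"
| "sw_follow (Suc n) i s = (case snd s of None \<Rightarrow> []
     | Some g \<Rightarrow> (if g = i then [i] else g # sw_follow n i (pns g s)))"

fun sw_loop :: "nat \<Rightarrow> nat \<Rightarrow> lstate \<Rightarrow> nat list" where
  "sw_loop 0 m s = []"
| "sw_loop (Suc n) m s =
    (let B = {i \<in> {1..m}. fst s i \<noteq> Some i} in
     if B = {} then []
     else (let i = Min B; s1 = pns i s; path = sw_follow (Suc m) i s1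
           in i # path @ sw_loop n m (run path s1)))"

definition sweep_plan :: "(nat \<Rightarrow> nat) \<Rightarrow> nat \<Rightarrow> nat list" where
  "sweep_plan \<pi> m = sw_loop (Suc m) m (init \<pi> m)"

definition orb :: "(nat \<Rightarrow> nat) \<Rightarrow> nat \<Rightarrow> nat set" where
  "orb \<pi> i = range (\<lambda>k. (\<pi> ^^ k) i)"

definition cmin :: "(nat \<Rightarrow> nat) \<Rightarrow> nat \<Rightarrow> nat" where
  "cmin \<pi> i = Min (orb \<pi> i)"

definition cmax :: "(nat \<Rightarrow> nat) \<Rightarrow> nat \<Rightarrow> nat" where
  "cmax \<pi> i = Max (orb \<pi> i)"

definition cycmins :: "(nat \<Rightarrow> nat) \<Rightarrow> nat \<Rightarrow> nat set" where
  "cycmins \<pi> m = {y \<in> {1..m}. \<pi> y \<noteq> y \<and> cmin \<pi> y = y}"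

definition ovl :: "(nat \<Rightarrow> nat) \<Rightarrow> nat \<Rightarrow> (nat \<times> nat) set" where
  "ovl \<pi> m = {(i,j). i \<in> {1..m} \<and> j \<in> {1..m} \<and> \<pi> i \<noteq> i \<and> \<pi> j \<noteq> j \<and>
                    cmin \<pi> i \<le> cmax \<pi> j \<and> cmin \<pi> j \<le> cmax \<pi> i}"

definition grp :: "(nat \<Rightarrow> nat) \<Rightarrow> nat \<Rightarrow> nat \<Rightarrow> nat set" where
  "grp \<pi> m i = {j. (i,j) \<in> (ovl \<pi> m)\<^sup>*}"

definition gmax :: "(nat \<Rightarrow> nat) \<Rightarrow> nat \<Rightarrow> nat \<Rightarrow> nat" where
  "gmax \<pi> m i = Max (grp \<pi> m i)"

text \<open>Simulation of OptPlanLOR as a robot: state s, current position x, set st of minimal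
  cells of cycles already started.  First argument is fuel.
  - Empty hand: start the not-yet-started cycle with smallest minimum (or stop).
  - Holding label g at position x which is the right end of its group and there are
    unstarted cycles to the right: go right and park at the minimum of the next group.
  - Otherwise head to g, but if the minimum of the next not-yet-started cycle of the group
    of g lies strictly between x and g, park there (swap) and thereby start that cycle.\<close>
fun opt_run :: "nat \<Rightarrow> (nat \<Rightarrow> nat) \<Rightarrow> nat \<Rightarrow> lstate \<Rightarrow> nat \<Rightarrow> nat set \<Rightarrow> nat list" where
  "opt_run 0 \<pi> m s x st = []"
| "opt_run (Suc n) \<pi> m s x st =
    (case snd s of
       None \<Rightarrow>
         (let U = {y \<in> cycmins \<pi> m. y \<notin> st} in
          if U = {} then []
          else (let y = Min U in y # opt_run n \<pi> m (pns y s) y (insert y st)))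
     | Some g \<Rightarrow>
         (let R = {y \<in> cycmins \<pi> m. y \<notin> st \<and> x < y} in
          if x = gmax \<pi> m x \<and> R \<noteq> {} then
            (let y = Min R in y # opt_run n \<pi> m (pns y s) y (insert y st))
          else
            (let U = {y \<in> cycmins \<pi> m. y \<notin> st \<and> y \<in> grp \<pi> m g} in
             if U \<noteq> {} \<and> min x g < Min U \<and> Min U < max x g then
               (let y = Min U in y # opt_run n \<pi> m (pns y s) y (insert y st))
             else g # opt_run n \<pi> m (pns g s) g st)))"

definition opt_plan :: "(nat \<Rightarrow> nat) \<Rightarrow> nat \<Rightarrow> nat list" where
  "opt_plan \<pi> m = opt_run (4 * m + 4) \<pi> m (init \<pi> m) 1 {}"

definition perms :: "nat \<Rightarrow> (nat \<Rightarrow> nat) set" where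
  "perms m = {\<pi>. \<pi> permutes {1..m}}"

definition exp_sweep_cost :: "real \<Rightarrow> real \<Rightarrow> nat \<Rightarrow> real" where
  "exp_sweep_cost cp ct m =
     (\<Sum>\<pi>\<in>perms m. cost cp ct (sweep_plan \<pi> m)) / real (card (perms m))"

definition exp_opt_cost :: "real \<Rightarrow> real \<Rightarrow> nat \<Rightarrow> real" where
  "exp_opt_cost cp ct m =
     (\<Sum>\<pi>\<in>perms m. opt_cost cp ct m \<pi>) / real (card (perms m))"

end

theory Submission
  imports Defs "HOL-Combinatorics.Orbits"
begin

text \<open>Every item on the wrong side of the cut between cells \<open>k\<close> and \<open>k + 1\<close>
  must be carried across it, one at a time, so every valid tour crosses the cut at least twice
  the number of items that have to pass it to the right, and at least twice if some displaced
  cell lies to its right; the length of a tour is the sum of its crossing numbers. Every cell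
  of a non-trivial cycle is visited, the first visited cell of each cycle twice, so every
  valid plan has at least as many pick-n-swaps as there are displaced cells and cycles.

  OptPlanLOR attains both bounds at once: along its run it keeps an invariant which shows
  that every move either carries an item across a cut towards its target, lowering the
  potential of that cut, or crosses cuts of zero flow at most twice to reach the next group,
  and that every cycle costs exactly one extra pick-n-swap.

  SweepCyclesLOR uses at most \<open>2 m\<close> pick-n-swaps and crosses every cut at most two times
  more often than the lower bound, so its cost exceeds \<open>c\<^sub>t D\<close>, with \<open>D = \<Sum>|i - \<pi> i|\<close>
  a lower bound for the optimum, by \<open>O(m (c\<^sub>p + c\<^sub>t))\<close>. The mean of \<open>D\<close> over all
  permutations is \<open>(m\<^sup>2 - 1) / 3\<close>, hence the ratio of the expected costs is
  \<open>1 + O(1 / m)\<close>.\<close>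

section \<open>Cycles and cycle groups of an instance\<close>

locale lor =
  fixes \<pi> :: "nat \<Rightarrow> nat" and m :: nat
  assumes perm: "\<pi> permutes {1..m}"
begin

lemma permutation_pi: "permutation \<pi>"
  using perm permutation_permutes by (metis finite_atLeastAtMost)

lemma pi_in: "i \<in> {1..m} \<Longrightarrow> \<pi> i \<in> {1..m}"
  by (simp only: permutes_in_image[OF perm])

lemma inj_pi: "inj \<pi>"
  by (rule permutes_inj[OF perm])

lemma pi_eq_iff[simp]: "\<pi> a = \<pi> b \<longleftrightarrow> a = b"
  using inj_pi by (meson injD)

lemma funpow_in: "i \<in> {1..m} \<Longrightarrow> (\<pi> ^^ k) i \<in> {1..m}"
  by (induct k) (use pi_in in auto)

lemma orb_orbit: "orb \<pi> i = orbit \<pi> i"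
  unfolding orb_def orbit_altdef_permutation[OF permutation_pi] by auto

lemma self_in_orb[simp]: "i \<in> orb \<pi> i"
  unfolding orb_def by (metis funpow_0 rangeI)

lemma finite_orb[simp]: "finite (orb \<pi> i)"
  unfolding orb_orbit by (rule finite_orbit[OF permutation_self_in_orbit[OF permutation_pi]])

lemma pi_in_orb: "j \<in> orb \<pi> i \<Longrightarrow> \<pi> j \<in> orb \<pi> i"
  unfolding orb_def by (auto, metis funpow.simps(2) o_apply rangeI)

lemma orb_eq: "j \<in> orb \<pi> i \<Longrightarrow> orb \<pi> j = orb \<pi> i"
  unfolding orb_orbit
  by (meson orbit_swap orbit_trans permutation_pi permutation_self_in_orbit subset_antisym subsetI)

lemma orb_subset: "i \<in> {1..m} \<Longrightarrow> orb \<pi> i \<subseteq> {1..m}"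
  unfolding orb_def using funpow_in by auto

lemma orb_fixed: "\<pi> i = i \<Longrightarrow> orb \<pi> i = {i}"
  by (simp add: orb_orbit orbit_eq_singleton_iff)

lemma orb_nonfixed: "j \<in> orb \<pi> i \<Longrightarrow> \<pi> i \<noteq> i \<Longrightarrow> \<pi> j \<noteq> j"
  by (metis orb_eq orb_fixed singletonD self_in_orb)

lemma orb_surj: "\<pi> ` orb \<pi> y = orb \<pi> y"
  by (rule endo_inj_surj) (auto simp: pi_in_orb inj_on_def)

lemma cmin_in: "cmin \<pi> i \<in> orb \<pi> i"
  unfolding cmin_def using self_in_orb[of i] finite_orb[of i] by (metis Min_in empty_iff)

lemma cmax_in: "cmax \<pi> i \<in> orb \<pi> i"
  unfolding cmax_def using self_in_orb[of i] finite_orb[of i] by (metis Max_in empty_iff)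

lemma cmin_le: "j \<in> orb \<pi> i \<Longrightarrow> cmin \<pi> i \<le> j"
  unfolding cmin_def by simp

lemma cmax_ge: "j \<in> orb \<pi> i \<Longrightarrow> j \<le> cmax \<pi> i"
  unfolding cmax_def by simp

lemma cmin_orb: "j \<in> orb \<pi> i \<Longrightarrow> cmin \<pi> j = cmin \<pi> i"
  unfolding cmin_def using orb_eq by simp

lemma cmax_orb: "j \<in> orb \<pi> i \<Longrightarrow> cmax \<pi> j = cmax \<pi> i"
  unfolding cmax_def using orb_eq by simp

lemma cmin_self: "cmin \<pi> i \<le> i"
  using cmin_le self_in_orb by blast

lemma cmax_self: "i \<le> cmax \<pi> i"
  using cmax_ge self_in_orb by blast

lemma cmax_cmin[simp]: "cmax \<pi> (cmin \<pi> i) = cmax \<pi> i"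
  using cmin_in cmax_orb by blast

lemma pi_le_cmax: "\<pi> i \<le> cmax \<pi> i"
  using cmax_ge pi_in_orb self_in_orb by blast

lemma orb_cmin: "i \<in> orb \<pi> (cmin \<pi> i)"
  using orb_eq[OF cmin_in] by simp

abbreviation displaced :: "nat set" where
  "displaced \<equiv> {i \<in> {1..m}. \<pi> i \<noteq> i}"

lemma orb_displaced: "y \<in> displaced \<Longrightarrow> orb \<pi> y \<subseteq> displaced"
  using orb_subset orb_nonfixed by blast

lemma cmin_in_cycmins: assumes "i \<in> displaced" shows "cmin \<pi> i \<in> cycmins \<pi> m"
proof -
  have "cmin \<pi> i \<in> displaced" using orb_displaced[OF assms] cmin_in by blast
  then show ?thesis unfolding cycmins_def using cmin_orb[OF cmin_in] by simp
qed

lemma cycmins_displaced: "y \<in> cycmins \<pi> m \<Longrightarrow> y \<in> displaced"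
  unfolding cycmins_def by auto

lemma cycmins_cmin: "y \<in> cycmins \<pi> m \<Longrightarrow> cmin \<pi> y = y"
  unfolding cycmins_def by auto

lemma finite_cycmins[simp]: "finite (cycmins \<pi> m)"
  by (rule finite_subset[of _ "{1..m}"]) (auto simp: cycmins_def)

lemma in_orb_iff_cmin:
  assumes "y \<in> cycmins \<pi> m" and "i \<in> displaced"
  shows "i \<in> orb \<pi> y \<longleftrightarrow> cmin \<pi> i = y"
  using cmin_orb[of i y] cycmins_cmin[OF assms(1)] orb_cmin[of i] by auto

lemma displaced_UN_cycles: "displaced = (\<Union>y\<in>cycmins \<pi> m. orb \<pi> y)"
  using cmin_in_cycmins orb_cmin orb_displaced cycmins_displaced by blast

lemma disjoint_cycles:
  "y \<in> cycmins \<pi> m \<Longrightarrow> y' \<in> cycmins \<pi> m \<Longrightarrow> y \<noteq> y' \<Longrightarrow> orb \<pi> y \<inter> orb \<pi> y' = {}"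
proof -
  assume "y \<in> cycmins \<pi> m" "y' \<in> cycmins \<pi> m" "y \<noteq> y'"
  then show ?thesis using cmin_orb cycmins_cmin by (metis disjoint_iff)
qed

lemma card_displaced: "card displaced = (\<Sum>y\<in>cycmins \<pi> m. card (orb \<pi> y))"
  unfolding displaced_UN_cycles by (rule card_UN_disjoint) (auto simp: disjoint_cycles)

lemma card_displaced_le: "card displaced \<le> m"
  using card_mono[of "{1..m}" displaced] by fastforce

lemma card_cycmins_le: "card (cycmins \<pi> m) \<le> m"
  using card_mono[of "{1..m}" "cycmins \<pi> m"] cycmins_displaced by fastforce

lemma ovl_sym: "(i,j) \<in> ovl \<pi> m \<Longrightarrow> (j,i) \<in> ovl \<pi> m"
  unfolding ovl_def by auto

lemma ovl_rtrancl_sym: "(i,j) \<in> (ovl \<pi> m)\<^sup>* \<Longrightarrow> (j,i) \<in> (ovl \<pi> m)\<^sup>*"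
  by (induct rule: rtrancl_induct) (auto intro: converse_rtrancl_into_rtrancl ovl_sym)

lemma self_in_grp[simp]: "i \<in> grp \<pi> m i"
  unfolding grp_def by simp

lemma grp_subset: "grp \<pi> m i \<subseteq> insert i displaced"
proof
  fix j assume "j \<in> grp \<pi> m i"
  then have "(i,j) \<in> (ovl \<pi> m)\<^sup>*" unfolding grp_def by simp
  then show "j \<in> insert i displaced"
    by (induct rule: rtrancl_induct) (auto simp: ovl_def)
qed

lemma finite_grp[simp]: "finite (grp \<pi> m i)"
  by (rule finite_subset[OF grp_subset]) simp

lemma grp_eq: "j \<in> grp \<pi> m i \<Longrightarrow> grp \<pi> m j = grp \<pi> m i"
  unfolding grp_def using ovl_rtrancl_sym by (blast intro: rtrancl_trans)

lemma ovl_grp: "(i,j) \<in> ovl \<pi> m \<Longrightarrow> j \<in> grp \<pi> m i"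
  unfolding grp_def by auto

lemma ovlI:
  "i \<in> displaced \<Longrightarrow> j \<in> displaced \<Longrightarrow> cmin \<pi> i \<le> cmax \<pi> j \<Longrightarrow> cmin \<pi> j \<le> cmax \<pi> i
   \<Longrightarrow> (i,j) \<in> ovl \<pi> m"
  by (simp add: ovl_def)

lemma orb_grp: assumes i: "i \<in> displaced" and j: "j \<in> orb \<pi> i" shows "j \<in> grp \<pi> m i"
proof -
  have "j \<in> displaced" using orb_displaced[OF i] j by blast
  moreover have "cmin \<pi> i \<le> cmax \<pi> i" using cmin_self[of i] cmax_self[of i] by linarith
  ultimately have "(i,j) \<in> ovl \<pi> m" using i cmin_orb[OF j] cmax_orb[OF j] by (intro ovlI) auto
  then show ?thesis by (rule ovl_grp)
qed

lemma gmax_ge: "j \<in> grp \<pi> m i \<Longrightarrow> j \<le> gmax \<pi> m i"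
  unfolding gmax_def by simp

lemma gmax_in: "gmax \<pi> m i \<in> grp \<pi> m i"
  unfolding gmax_def using self_in_grp[of i] finite_grp[of i] by (metis Max_in empty_iff)

lemma gmax_self: "i \<le> gmax \<pi> m i"
  by (simp add: gmax_ge)

lemma gmax_eq: "j \<in> grp \<pi> m i \<Longrightarrow> gmax \<pi> m j = gmax \<pi> m i"
  unfolding gmax_def using grp_eq by simp

lemma gmax_orb: "i \<in> displaced \<Longrightarrow> j \<in> orb \<pi> i \<Longrightarrow> gmax \<pi> m j = gmax \<pi> m i"
  using gmax_eq orb_grp by blast

lemma gmax_pi: "i \<in> displaced \<Longrightarrow> gmax \<pi> m (\<pi> i) = gmax \<pi> m i"
  using gmax_orb pi_in_orb self_in_orb by blast

lemma gmax_displaced: assumes "i \<in> displaced" shows "gmax \<pi> m i \<in> displaced"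
proof -
  have "gmax \<pi> m i \<in> insert i displaced" by (rule subsetD[OF grp_subset gmax_in])
  then show ?thesis using assms by (cases "gmax \<pi> m i = i") auto
qed

lemma grp_if_gmax_eq: "gmax \<pi> m a = gmax \<pi> m b \<Longrightarrow> b \<in> grp \<pi> m a"
proof -
  assume e: "gmax \<pi> m a = gmax \<pi> m b"
  have "grp \<pi> m a = grp \<pi> m (gmax \<pi> m a)" by (rule grp_eq[OF gmax_in, symmetric])
  also have "\<dots> = grp \<pi> m b" unfolding e by (rule grp_eq[OF gmax_in])
  finally show ?thesis by simp
qed

lemma cmax_gmax: "i \<in> displaced \<Longrightarrow> cmax \<pi> (gmax \<pi> m i) = gmax \<pi> m i"
proof -
  assume i: "i \<in> displaced"
  have "cmax \<pi> (gmax \<pi> m i) \<in> grp \<pi> m (gmax \<pi> m i)"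
    by (rule orb_grp[OF gmax_displaced[OF i] cmax_in])
  then have "cmax \<pi> (gmax \<pi> m i) \<in> grp \<pi> m i" using grp_eq[OF gmax_in] by simp
  then have "cmax \<pi> (gmax \<pi> m i) \<le> gmax \<pi> m i" by (rule gmax_ge)
  then show ?thesis using cmax_self[of "gmax \<pi> m i"] by simp
qed

lemma cycle_ends_before_gmax:
  assumes i: "i \<in> displaced" and w: "w \<in> displaced" and le: "w \<le> gmax \<pi> m i"
  shows "cmax \<pi> w \<le> gmax \<pi> m i"
proof (rule ccontr)
  assume nle: "\<not> cmax \<pi> w \<le> gmax \<pi> m i"
  let ?u = "gmax \<pi> m i"
  have "(?u, w) \<in> ovl \<pi> m"
  proof (rule ovlI[OF gmax_displaced[OF i] w])
    show "cmin \<pi> ?u \<le> cmax \<pi> w" using nle cmin_self[of ?u] by linarith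
    show "cmin \<pi> w \<le> cmax \<pi> ?u" using cmax_gmax[OF i] cmin_self[of w] le by linarith
  qed
  then have "w \<in> grp \<pi> m ?u" by (rule ovl_grp)
  then have "grp \<pi> m w = grp \<pi> m i" using grp_eq grp_eq[OF gmax_in] by simp
  then have "cmax \<pi> w \<in> grp \<pi> m i" using orb_grp[OF w cmax_in] by simp
  then show False using nle gmax_ge by blast
qed

lemma gmax_le_if_le_gmax:
  assumes i: "i \<in> displaced" and w: "w \<in> displaced" and le: "w \<le> gmax \<pi> m i"
  shows "gmax \<pi> m w \<le> gmax \<pi> m i"
proof -
  define u where "u = gmax \<pi> m i"
  have u: "u \<in> displaced" unfolding u_def using gmax_displaced i by blast
  have "v \<le> u" if "(w,v) \<in> (ovl \<pi> m)\<^sup>*" for v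
    using that
  proof (induct rule: rtrancl_induct)
    case base show ?case using le u_def by simp
  next
    case (step a b)
    have a: "a \<in> displaced" "b \<in> displaced" "cmin \<pi> b \<le> cmax \<pi> a"
      using step(2) unfolding ovl_def by auto
    have "cmax \<pi> a \<le> u" using cycle_ends_before_gmax[OF i a(1)] step(3) u_def by simp
    show "b \<le> u"
    proof (rule ccontr)
      assume nb: "\<not> b \<le> u"
      have "(u, b) \<in> ovl \<pi> m"
      proof (rule ovlI[OF u a(2)])
        show "cmin \<pi> u \<le> cmax \<pi> b" using nb cmin_self[of u] cmax_self[of b] by linarith
        show "cmin \<pi> b \<le> cmax \<pi> u"
          using a(3) \<open>cmax \<pi> a \<le> u\<close> cmax_gmax[OF i] unfolding u_def by linarith
      qed
      then have "b \<in> grp \<pi> m u" by (rule ovl_grp)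
      then have "b \<in> grp \<pi> m i" using grp_eq[OF gmax_in] u_def by simp
      then show False using nb gmax_ge[of b i] u_def by simp
    qed
  qed
  moreover have "(w, gmax \<pi> m w) \<in> (ovl \<pi> m)\<^sup>*" using gmax_in[of w] unfolding grp_def by simp
  ultimately show ?thesis unfolding u_def by simp
qed

lemma lt_if_gmax_lt:
  "i \<in> displaced \<Longrightarrow> w \<in> displaced \<Longrightarrow> gmax \<pi> m i < gmax \<pi> m w \<Longrightarrow> gmax \<pi> m i < w"
  using gmax_le_if_le_gmax by fastforce

lemma gmax_between:
  assumes a: "a \<in> displaced" and z: "z \<in> displaced" and "a < z" and "z < b"
    and e: "gmax \<pi> m a = gmax \<pi> m b"
  shows "gmax \<pi> m z = gmax \<pi> m a"
proof -
  have "gmax \<pi> m z \<le> gmax \<pi> m a"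
    using gmax_le_if_le_gmax[OF a z] \<open>z < b\<close> gmax_self[of b] e by simp
  moreover have "\<not> gmax \<pi> m z < gmax \<pi> m a"
    using lt_if_gmax_lt[OF z a] gmax_self[of z] \<open>a < z\<close> by fastforce
  ultimately show ?thesis by simp
qed

lemma gmax_fixed_if_no_crossing:
  assumes H: "\<forall>w\<in>displaced. cmin \<pi> w \<le> F \<longrightarrow> cmax \<pi> w \<le> F"
  shows "gmax \<pi> m F = F"
proof -
  have "v \<le> F" if "(F,v) \<in> (ovl \<pi> m)\<^sup>*" for v
    using that
  proof (induct rule: rtrancl_induct)
    case (step a b)
    have a: "a \<in> displaced" and b: "b \<in> displaced" using step(2) unfolding ovl_def by auto
    have "cmax \<pi> a \<le> F" using H a cmin_self[of a] step(3) by force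
    then have "cmin \<pi> b \<le> F" using step(2) unfolding ovl_def by auto
    then have "cmax \<pi> b \<le> F" using H b by blast
    then show ?case using cmax_self[of b] by linarith
  qed simp
  moreover have "(F, gmax \<pi> m F) \<in> (ovl \<pi> m)\<^sup>*" using gmax_in[of F] unfolding grp_def by simp
  ultimately have "gmax \<pi> m F \<le> F" by simp
  then show ?thesis using gmax_self[of F] by linarith
qed

end

lemma pns_alt: "pns p s = ((fst s)(p := snd s), fst s p)"
  by (cases "snd s") (auto simp: pns_def)

lemma run_Cons[simp]: "run (p # ps) s = run ps (pns p s)"
  by (simp add: run_def)

lemma run_Nil[simp]: "run [] s = s"
  by (simp add: run_def)

lemma run_append: "run (as @ bs) s = run bs (run as s)"
  by (simp add: run_def)

lemma run_notin: "j \<notin> set ps \<Longrightarrow> fst (run ps s) j = fst s j"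
  by (induct ps arbitrary: s) (auto simp: pns_alt)

definition well_formed :: "nat \<Rightarrow> lstate \<Rightarrow> bool" where
  "well_formed m s \<longleftrightarrow> (\<forall>i. i \<notin> {1..m} \<longrightarrow> fst s i = None) \<and>
     (\<forall>i j l. fst s i = Some l \<longrightarrow> fst s j = Some l \<longrightarrow> i = j) \<and>
     (\<forall>l. snd s = Some l \<longrightarrow> (\<forall>i. fst s i \<noteq> Some l))"

lemma well_formed_pns: "well_formed m s \<Longrightarrow> p \<in> {1..m} \<Longrightarrow> well_formed m (pns p s)"
  unfolding well_formed_def pns_alt by (auto split: if_splits)

lemma well_formed_run: "well_formed m s \<Longrightarrow> set ps \<subseteq> {1..m} \<Longrightarrow> well_formed m (run ps s)"
  by (induct ps arbitrary: s) (auto simp: well_formed_pns)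

section \<open>Crossings of cuts\<close>

text \<open>The length of a tour on the
  integer points \<open>1..m\<close> is the sum over the cuts \<open>1..m-1\<close> of the number of times it crosses
  them; lower bounds on the travel cost are therefore proved cut by cut.\<close>

definition crosses :: "nat \<Rightarrow> nat \<Rightarrow> nat \<Rightarrow> nat" where
  "crosses k a b = (if min a b \<le> k \<and> k < max a b then 1 else 0)"

fun crossings_open :: "nat \<Rightarrow> nat \<Rightarrow> nat list \<Rightarrow> nat" where
  "crossings_open k x [] = 0"
| "crossings_open k x (p # ps) = crosses k x p + crossings_open k p ps"

fun crossings :: "nat \<Rightarrow> nat \<Rightarrow> nat list \<Rightarrow> nat" where
  "crossings k x [] = crosses k x 1"
| "crossings k x (p # ps) = crosses k x p + crossings k p ps"

lemma crossings_append:
  "crossings k x (ps @ qs) = crossings_open k x ps + crossings k (last (x # ps)) qs"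
  by (induct ps arbitrary: x) auto

lemma crosses_eq_0_iff: "crosses k a b = 0 \<longleftrightarrow> (a \<le> k) = (b \<le> k)"
  unfolding crosses_def by (auto simp: min_def max_def)

lemma crosses_0_or_1: "crosses k a b = 0 \<or> crosses k a b = 1"
  unfolding crosses_def by simp

lemma abs_diff_eq_sum_crosses:
  assumes "a \<in> {1..m}" "b \<in> {1..m}"
  shows "\<bar>real a - real b\<bar> = real (\<Sum>k\<in>{1..<m}. crosses k a b)"
proof -
  have "(\<Sum>k\<in>{1..<m}. crosses k a b) = (\<Sum>k\<in>{min a b..<max a b}. 1)"
    by (rule sum.mono_neutral_cong_right) (use assms in \<open>auto simp: crosses_def\<close>)
  also have "\<dots> = max a b - min a b" by simp
  finally show ?thesis by (simp add: max_def min_def of_nat_diff)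
qed

lemma path_len_Cons2: "path_len (a # b # xs) = \<bar>real a - real b\<bar> + path_len (b # xs)"
  by (simp add: path_len_def)

lemma path_len_nonneg: "0 \<le> path_len xs"
  unfolding path_len_def by (rule sum_list_nonneg) auto

lemma path_len_eq_sum_crossings:
  "x \<in> {1..m} \<Longrightarrow> set ps \<subseteq> {1..m} \<Longrightarrow>
   path_len (x # ps @ [1]) = real (\<Sum>k\<in>{1..<m}. crossings k x ps)"
proof (induct ps arbitrary: x)
  case Nil
  then show ?case using abs_diff_eq_sum_crosses[of x m 1] by (simp add: path_len_def)
next
  case (Cons p ps)
  have "path_len (x # (p # ps) @ [1]) = \<bar>real x - real p\<bar> + path_len (p # ps @ [1])"
    by (simp add: path_len_Cons2)
  also have "\<dots> = real (\<Sum>k\<in>{1..<m}. crosses k x p) + real (\<Sum>k\<in>{1..<m}. crossings k p ps)"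
    using Cons abs_diff_eq_sum_crosses[of x m p] by simp
  finally show ?case by (simp add: sum.distrib)
qed

text \<open>Every item on the
  wrong side has to be carried across \<open>k\<close>, and the end-effector carries one item at a time.\<close>

definition wrong_side :: "nat \<Rightarrow> nat \<Rightarrow> nat option \<Rightarrow> nat" where
  "wrong_side k pos v = (case v of None \<Rightarrow> 0 | Some l \<Rightarrow> if (pos \<le> k) = (l \<le> k) then 0 else 1)"

definition cut_potential :: "nat \<Rightarrow> nat \<Rightarrow> lstate \<Rightarrow> nat \<Rightarrow> nat" where
  "cut_potential m k s x = (\<Sum>i\<in>{1..m}. wrong_side k i (fst s i)) + wrong_side k x (snd s)"

lemma cut_potential_pns:
  assumes "p \<in> {1..m}" shows "cut_potential m k (pns p s) p = cut_potential m k s p"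
proof -
  have "(\<Sum>i\<in>{1..m}. wrong_side k i (((fst s)(p := v)) i))
      = wrong_side k p v + (\<Sum>i\<in>{1..m}-{p}. wrong_side k i (fst s i))" for v
  proof -
    have "(\<Sum>i\<in>{1..m}-{p}. wrong_side k i (((fst s)(p := v)) i))
        = (\<Sum>i\<in>{1..m}-{p}. wrong_side k i (fst s i))"
      by (rule sum.cong) auto
    then show ?thesis
      using sum.remove[OF finite_atLeastAtMost assms, of "\<lambda>i. wrong_side k i (((fst s)(p := v)) i)"] by simp
  qed
  from this[of "snd s"] this[of "fst s p"] show ?thesis
    unfolding cut_potential_def pns_alt by simp
qed

lemma cut_potential_move_hand:
  "cut_potential m k s t + wrong_side k x (snd s) = cut_potential m k s x + wrong_side k t (snd s)"
  unfolding cut_potential_def by simp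

lemma cut_potential_move: "cut_potential m k s x \<le> crosses k x p + cut_potential m k s p"
proof -
  have "wrong_side k x h \<le> crosses k x p + wrong_side k p h" for h
    using crosses_eq_0_iff[of k x p] unfolding wrong_side_def by (cases h) auto
  from this[of "snd s"] show ?thesis unfolding cut_potential_def by linarith
qed

lemma cut_potential_carry:
  assumes h: "snd s = Some g" and side: "crosses k x t = 1 \<Longrightarrow> (t \<le> k) = (g \<le> k)"
  shows "crosses k x t + cut_potential m k s t \<le> cut_potential m k s x"
proof (cases "crosses k x t = 0")
  case True
  then have "wrong_side k x (snd s) = wrong_side k t (snd s)"
    using crosses_eq_0_iff[of k x t] unfolding wrong_side_def by (simp split: option.splits)
  then show ?thesis using cut_potential_move_hand[of m k s t x] True by simp
next
  case False
  then have c1: "crosses k x t = 1" using crosses_0_or_1[of k x t] by simp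
  have "(x \<le> k) \<noteq> (t \<le> k)" using False crosses_eq_0_iff[of k x t] by simp
  then have "wrong_side k x (snd s) = 1" "wrong_side k t (snd s) = 0"
    using side[OF c1] h unfolding wrong_side_def by auto
  then show ?thesis using cut_potential_move_hand[of m k s t x] c1 by simp
qed

lemma cut_potential_le_crossings:
  "set ps \<subseteq> {1..m} \<Longrightarrow> cut_potential m k s x \<le> crossings k x ps + cut_potential m k (run ps s) 1"
proof (induct ps arbitrary: s x)
  case Nil then show ?case using cut_potential_move[of m k s x 1] by simp
next
  case (Cons p ps)
  have "cut_potential m k s x \<le> crosses k x p + cut_potential m k s p"
    by (rule cut_potential_move)
  also have "\<dots> = crosses k x p + cut_potential m k (pns p s) p"
    using Cons(2) cut_potential_pns by simp
  also have "\<dots> \<le> crosses k x p + (crossings k p ps + cut_potential m k (run ps (pns p s)) 1)"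
    using Cons by simp
  finally show ?case by simp
qed

lemma cut_potential_goal: "cut_potential m k (goal m) x = 0"
  unfolding cut_potential_def goal_def wrong_side_def by simp

lemma crossings_if_visits_right:
  assumes "1 \<le> k"
  shows "(x \<le> k \<longrightarrow> (\<exists>j\<in>set ps. k < j) \<longrightarrow> 2 \<le> crossings k x ps) \<and>
         (k < x \<longrightarrow> 1 \<le> crossings k x ps)"
proof (induct ps arbitrary: x)
  case Nil then show ?case using assms by (auto simp: crosses_def)
next
  case (Cons p ps)
  then show ?case by (cases "p \<le> k") (auto simp: crosses_def)
qed

lemma sum_indicator_eq_card:
  "finite A \<Longrightarrow> (\<Sum>x\<in>A. if P x then 1 else 0) = card {x\<in>A. P x}"
  using sum.inter_filter[of A "\<lambda>_. 1::nat" P] by simp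

context lor
begin

lemma well_formed_init: "well_formed m (init \<pi> m)"
  unfolding well_formed_def init_def by auto

definition cut_flow :: "nat \<Rightarrow> nat" where
  "cut_flow k = card {i\<in>{1..m}. i \<le> k \<and> k < \<pi> i}"

lemma cut_flow_leftwards: "card {i\<in>{1..m}. k < i \<and> \<pi> i \<le> k} = cut_flow k"
proof -
  let ?A = "{i\<in>{1..m}. i \<le> k}"
  let ?P = "{i\<in>{1..m}. \<pi> i \<in> ?A}"
  have "bij_betw \<pi> ?P ?A"
    unfolding bij_betw_def
  proof
    show "inj_on \<pi> ?P" using inj_pi by (simp add: inj_on_def)
    show "\<pi> ` ?P = ?A"
    proof
      show "\<pi> ` ?P \<subseteq> ?A" by auto
      show "?A \<subseteq> \<pi> ` ?P"
      proof
        fix a assume a: "a \<in> ?A"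
        then have "a \<in> {1..m}" by auto
        then obtain i where "i \<in> {1..m}" "\<pi> i = a"
          using permutes_image[OF perm] by (metis imageE)
        then show "a \<in> \<pi> ` ?P" using a by auto
      qed
    qed
  qed
  then have "card ?P = card ?A" by (rule bij_betw_same_card)
  moreover have "card ?P = card (?P \<inter> ?A) + card (?P - ?A)"
    by (rule card_Int_Diff) simp
  moreover have "card ?A = card (?A \<inter> ?P) + card (?A - ?P)"
    by (rule card_Int_Diff) simp
  ultimately have "card (?P - ?A) = card (?A - ?P)" by (simp add: Int_commute)
  moreover have "?P - ?A = {i\<in>{1..m}. k < i \<and> \<pi> i \<le> k}"
  proof (rule set_eqI)
    fix i show "i \<in> ?P - ?A \<longleftrightarrow> i \<in> {i\<in>{1..m}. k < i \<and> \<pi> i \<le> k}"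
      using pi_in[of i] by auto
  qed
  moreover have "?A - ?P = {i\<in>{1..m}. i \<le> k \<and> k < \<pi> i}"
  proof (rule set_eqI)
    fix i show "i \<in> ?A - ?P \<longleftrightarrow> i \<in> {i\<in>{1..m}. i \<le> k \<and> k < \<pi> i}"
      using pi_in[of i] by auto
  qed
  ultimately show ?thesis unfolding cut_flow_def by simp
qed

lemma card_crossing_cut: "card {i\<in>{1..m}. (i \<le> k) \<noteq> (\<pi> i \<le> k)} = 2 * cut_flow k"
proof -
  have "{i\<in>{1..m}. (i \<le> k) \<noteq> (\<pi> i \<le> k)}
      = {i\<in>{1..m}. i \<le> k \<and> k < \<pi> i} \<union> {i\<in>{1..m}. k < i \<and> \<pi> i \<le> k}"
    by auto
  also have "card \<dots> = cut_flow k + cut_flow k"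
    using cut_flow_leftwards unfolding cut_flow_def by (subst card_Un_disjoint) auto
  finally show ?thesis by simp
qed

lemma cut_potential_init: "cut_potential m k (init \<pi> m) x = 2 * cut_flow k"
proof -
  have "(\<Sum>i\<in>{1..m}. wrong_side k i (fst (init \<pi> m) i))
      = (\<Sum>i\<in>{1..m}. if (i \<le> k) \<noteq> (\<pi> i \<le> k) then 1 else 0)"
    unfolding init_def wrong_side_def by (rule sum.cong) auto
  also have "\<dots> = 2 * cut_flow k"
    by (simp only: sum_indicator_eq_card[OF finite_atLeastAtMost] card_crossing_cut)
  finally show ?thesis unfolding cut_potential_def init_def wrong_side_def by simp
qed

lemma valid_plan_visits_displaced:
  assumes v: "valid_plan m \<pi> ps" and i: "i \<in> displaced" shows "i \<in> set ps"
proof (rule ccontr)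
  assume "i \<notin> set ps"
  then have "fst (run ps (init \<pi> m)) i = fst (init \<pi> m) i" by (rule run_notin)
  then show False using v i unfolding valid_plan_def goal_def init_def by auto
qed

text \<open>Besides the flow, a cut with a displaced cell to its right is crossed at least twice,
  since the tour starts and ends at cell \<open>1\<close>.\<close>
definition cut_lower_bound :: "nat \<Rightarrow> nat" where
  "cut_lower_bound k =
     (if 0 < cut_flow k then 2 * cut_flow k else if \<exists>j\<in>displaced. k < j then 2 else 0)"

lemma crossings_ge_cut_lower_bound:
  assumes v: "valid_plan m \<pi> ps" and k: "1 \<le> k"
  shows "cut_lower_bound k \<le> crossings k 1 ps"
proof -
  have "set ps \<subseteq> {1..m}" using v unfolding valid_plan_def by simp
  from cut_potential_le_crossings[OF this, of k "init \<pi> m" 1]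
  have "2 * cut_flow k \<le> crossings k 1 ps"
    using cut_potential_init v cut_potential_goal unfolding valid_plan_def by simp
  moreover have "(\<exists>j\<in>displaced. k < j) \<Longrightarrow> 2 \<le> crossings k 1 ps"
    using crossings_if_visits_right[OF k, of 1 ps] valid_plan_visits_displaced[OF v] k by blast
  ultimately show ?thesis unfolding cut_lower_bound_def by auto
qed

lemma path_len_ge_cut_lower_bounds:
  assumes v: "valid_plan m \<pi> ps"
  shows "real (\<Sum>k\<in>{1..<m}. cut_lower_bound k) \<le> path_len (1 # ps @ [1])"
proof (cases "m = 0")
  case True
  then show ?thesis using path_len_nonneg by simp
next
  case False
  have "(\<Sum>k\<in>{1..<m}. cut_lower_bound k) \<le> (\<Sum>k\<in>{1..<m}. crossings k 1 ps)"
    by (rule sum_mono) (use crossings_ge_cut_lower_bound[OF v] in auto)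
  then have "real (\<Sum>k\<in>{1..<m}. cut_lower_bound k) \<le> real (\<Sum>k\<in>{1..<m}. crossings k 1 ps)"
    by (simp only: of_nat_le_iff)
  also have "\<dots> = path_len (1 # ps @ [1])"
    using path_len_eq_sum_crossings[of 1 m ps] v False unfolding valid_plan_def by simp
  finally show ?thesis .
qed

text \<open>Every cell of a cycle is visited, and the first visited cell of a cycle twice: at the
  first visit its item is picked up, and the item destined for that cell is still in
  another cell of the cycle.\<close>
lemma visits_cycle_ge:
  assumes v: "valid_plan m \<pi> ps" and y: "y \<in> cycmins \<pi> m"
  shows "card (orb \<pi> y) + 1 \<le> (\<Sum>i\<in>orb \<pi> y. count_list ps i)"
proof -
  have s: "set ps \<subseteq> {1..m}" using v unfolding valid_plan_def by simp
  have oNF: "orb \<pi> y \<subseteq> displaced" using orb_displaced cycmins_displaced[OF y] by blast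
  have vis: "1 \<le> count_list ps i" if "i \<in> orb \<pi> y" for i
  proof -
    have "i \<in> set ps" using valid_plan_visits_displaced[OF v] oNF that by blast
    then show ?thesis using count_list_0_iff[of ps i] by (cases "count_list ps i") auto
  qed
  have "\<exists>z\<in>set ps. z \<in> orb \<pi> y"
    using valid_plan_visits_displaced[OF v] oNF self_in_orb[of y] by blast
  then obtain as z bs where ps: "ps = as @ z # bs" and z: "z \<in> orb \<pi> y"
      and as: "\<forall>a\<in>set as. a \<notin> orb \<pi> y"
    using split_list_first_prop[of ps "\<lambda>a. a \<in> orb \<pi> y"] by (auto simp: Bex_def)
  have "z \<in> set bs"
  proof (rule ccontr)
    assume nz: "z \<notin> set bs"
    define s0 where "s0 = run as (init \<pi> m)"
    obtain w where w: "w \<in> orb \<pi> y" "\<pi> w = z" using orb_surj z by (metis imageE)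
    have "fst s0 w = fst (init \<pi> m) w" unfolding s0_def using run_notin as w by blast
    then have c0: "fst s0 w = Some z" using w oNF unfolding init_def by auto
    have "fst (run ps (init \<pi> m)) z = fst (run bs (pns z s0)) z"
      unfolding ps s0_def by (simp add: run_append)
    also have "\<dots> = snd s0" using run_notin[OF nz] by (simp add: pns_alt)
    finally have "snd s0 = Some z" using v z oNF unfolding valid_plan_def goal_def by auto
    moreover have "well_formed m s0" unfolding s0_def using well_formed_run[OF well_formed_init] s ps by auto
    ultimately show False using c0 unfolding well_formed_def by auto
  qed
  then have "1 \<le> count_list bs z" using count_list_0_iff[of bs z] by (cases "count_list bs z") auto
  then have cz: "2 \<le> count_list ps z" unfolding ps by simp
  have "(\<Sum>i\<in>orb \<pi> y. count_list ps i) = count_list ps z + (\<Sum>i\<in>orb \<pi> y - {z}. count_list ps i)"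
    using sum.remove[OF finite_orb z] by simp
  moreover have "(\<Sum>i\<in>orb \<pi> y - {z}. count_list ps i) \<ge> (\<Sum>i\<in>orb \<pi> y - {z}. 1)"
    by (rule sum_mono) (use vis in auto)
  moreover have "(\<Sum>i\<in>orb \<pi> y - {z}. (1::nat)) = card (orb \<pi> y) - 1"
    using z by simp
  moreover have "card (orb \<pi> y) \<ge> 1" using z by (auto simp: card_gt_0_iff Suc_le_eq)
  ultimately show ?thesis using cz by linarith
qed

lemma length_ge_displaced_plus_cycles:
  assumes v: "valid_plan m \<pi> ps"
  shows "card displaced + card (cycmins \<pi> m) \<le> length ps"
proof -
  have "card displaced + card (cycmins \<pi> m) = (\<Sum>y\<in>cycmins \<pi> m. card (orb \<pi> y) + 1)"
    unfolding card_displaced sum.distrib by simp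
  also have "\<dots> \<le> (\<Sum>y\<in>cycmins \<pi> m. \<Sum>i\<in>orb \<pi> y. count_list ps i)"
    by (rule sum_mono) (rule visits_cycle_ge[OF v])
  also have "\<dots> = (\<Sum>i\<in>displaced. count_list ps i)"
    unfolding displaced_UN_cycles by (rule sum.UNION_disjoint[symmetric]) (auto simp: disjoint_cycles)
  also have "\<dots> \<le> (\<Sum>i\<in>{1..m}. count_list ps i)" by (rule sum_mono2) auto
  also have "\<dots> = length ps" using v by (intro sum_count_set) (auto simp: valid_plan_def)
  finally show ?thesis .
qed

definition displacement :: real where
  "displacement = (\<Sum>i\<in>{1..m}. \<bar>real i - real (\<pi> i)\<bar>)"

lemma displacement_eq_sum_cut_flow: "displacement = real (\<Sum>k\<in>{1..<m}. 2 * cut_flow k)"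
proof -
  have "displacement = (\<Sum>i\<in>{1..m}. real (\<Sum>k\<in>{1..<m}. crosses k i (\<pi> i)))"
    unfolding displacement_def by (rule sum.cong) (use abs_diff_eq_sum_crosses pi_in in auto)
  also have "\<dots> = real (\<Sum>i\<in>{1..m}. \<Sum>k\<in>{1..<m}. crosses k i (\<pi> i))" by simp
  also have "(\<Sum>i\<in>{1..m}. \<Sum>k\<in>{1..<m}. crosses k i (\<pi> i))
      = (\<Sum>k\<in>{1..<m}. \<Sum>i\<in>{1..m}. crosses k i (\<pi> i))"
    by (rule sum.swap)
  also have "\<dots> = (\<Sum>k\<in>{1..<m}. 2 * cut_flow k)"
  proof (rule sum.cong[OF refl])
    fix k
    have "(\<Sum>i\<in>{1..m}. crosses k i (\<pi> i)) = (\<Sum>i\<in>{1..m}. if (i \<le> k) \<noteq> (\<pi> i \<le> k) then 1 else 0)"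
      unfolding crosses_def by (rule sum.cong) (auto simp: min_def max_def)
    then show "(\<Sum>i\<in>{1..m}. crosses k i (\<pi> i)) = 2 * cut_flow k"
      by (simp only: sum_indicator_eq_card[OF finite_atLeastAtMost] card_crossing_cut)
  qed
  finally show ?thesis .
qed

lemma cost_ge_displacement:
  assumes cp: "0 \<le> cp" and ct: "0 \<le> ct" and v: "valid_plan m \<pi> ps"
  shows "ct * displacement \<le> cost cp ct ps"
proof -
  have "(\<Sum>k\<in>{1..<m}. 2 * cut_flow k) \<le> (\<Sum>k\<in>{1..<m}. cut_lower_bound k)"
    by (rule sum_mono) (auto simp: cut_lower_bound_def)
  then have "displacement \<le> path_len (1 # ps @ [1])"
    using path_len_ge_cut_lower_bounds[OF v] unfolding displacement_eq_sum_cut_flow by linarith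
  then have "ct * displacement \<le> path_len (1 # ps @ [1]) * ct"
    using ct by (simp add: mult_left_mono mult.commute)
  moreover have "0 \<le> real (length ps) * cp" using cp by simp
  ultimately show ?thesis unfolding cost_def by linarith
qed

end

text \<open>Following such a chain with pick-n-swap operations places every visited item.\<close>
fun linked :: "(nat \<Rightarrow> nat option) \<Rightarrow> nat list \<Rightarrow> nat option \<Rightarrow> bool" where
  "linked c [] e = True"
| "linked c [a] e = (c a = e)"
| "linked c (a # b # l) e = (c a = Some b \<and> linked c (b # l) e)"

lemma linked_append: "linked c (xs @ b # ys) e \<longleftrightarrow> linked c xs (Some b) \<and> linked c (b # ys) e"
  by (induct xs) (auto elim: linked.elims)

lemma linked_upd: "z \<notin> set l \<Longrightarrow> linked (c(z := v)) l e = linked c l e"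
  by (induct c l e rule: linked.induct) auto

lemma linked_tl: "linked c (a # l) e \<Longrightarrow> linked c l e"
  by (cases l) auto

lemma linked_map_upt:
  "a \<le> b \<Longrightarrow> (\<forall>j. a \<le> j \<and> j < b \<longrightarrow> c (f j) = Some (f (Suc j))) \<Longrightarrow> c (f b) = e
   \<Longrightarrow> linked c (map f [a..<Suc b]) e"
proof (induct "b - a" arbitrary: a)
  case (Suc d)
  then have ab: "a < b" by simp
  have "[a..<Suc b] = a # Suc a # [Suc (Suc a)..<Suc b]" using ab by (simp add: upt_conv_Cons)
  moreover have "[Suc a..<Suc b] = Suc a # [Suc (Suc a)..<Suc b]" using ab by (simp add: upt_conv_Cons)
  moreover have "linked c (map f [Suc a..<Suc b]) e" using Suc by simp
  ultimately show ?case using Suc(4) ab by simp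
qed simp

lemma sorted_wrt_const_append:
  "\<forall>a\<in>set xs. f a = C \<Longrightarrow> \<forall>b\<in>set ys. f b \<le> C \<Longrightarrow> sorted_wrt (\<lambda>a b. f b \<le> (f a::nat)) ys
   \<Longrightarrow> sorted_wrt (\<lambda>a b. f b \<le> f a) (xs @ ys)"
  by (induct xs) auto

context lor
begin

definition cycle_len :: "nat \<Rightarrow> nat" where
  "cycle_len y = funpow_dist1 \<pi> y y"

text \<open>The cells of the cycle of \<open>y\<close> in the order in which cycle following visits them
  after picking up the item of \<open>y\<close>; it ends with \<open>y\<close> itself.\<close>
definition cycle_list :: "nat \<Rightarrow> nat list" where
  "cycle_list y = map (\<lambda>j. (\<pi> ^^ j) y) [1..<Suc (cycle_len y)]"

lemma self_orbit: "y \<in> orbit \<pi> y"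
  by (rule permutation_self_in_orbit[OF permutation_pi])

lemma funpow_cycle_len: "(\<pi> ^^ cycle_len y) y = y"
  unfolding cycle_len_def by (rule funpow_dist1_prop[OF self_orbit])

lemma cycle_len_pos: "0 < cycle_len y"
  unfolding cycle_len_def by simp

lemma orb_cycle_len: "orb \<pi> y = (\<lambda>n. (\<pi> ^^ n) y) ` {0..<cycle_len y}"
  unfolding orb_orbit cycle_len_def by (rule orbit_conv_funpow_dist1[OF self_orbit])

lemma set_cycle_list: "set (cycle_list y) = orb \<pi> y"
proof
  show "set (cycle_list y) \<subseteq> orb \<pi> y" unfolding cycle_list_def orb_def by auto
  show "orb \<pi> y \<subseteq> set (cycle_list y)"
  proof
    fix z assume "z \<in> orb \<pi> y"
    then obtain n where n: "n < cycle_len y" "z = (\<pi> ^^ n) y" unfolding orb_cycle_len by auto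
    show "z \<in> set (cycle_list y)"
    proof (cases "n = 0")
      case True
      then have "z = (\<pi> ^^ cycle_len y) y" using n funpow_cycle_len by simp
      then show ?thesis unfolding cycle_list_def using cycle_len_pos[of y] by auto
    next
      case False
      then show ?thesis unfolding cycle_list_def using n by auto
    qed
  qed
qed

lemma card_orb: "card (orb \<pi> y) = cycle_len y"
  using card_image[OF inj_on_funpow_dist1[OF self_orbit]] unfolding orb_cycle_len cycle_len_def
  by simp

lemma length_cycle_list: "length (cycle_list y) = card (orb \<pi> y)"
  unfolding cycle_list_def card_orb by simp

lemma distinct_cycle_list: "distinct (cycle_list y)"
  by (rule card_distinct) (simp add: set_cycle_list length_cycle_list)

lemma cycle_list_ne: "cycle_list y \<noteq> []"
  unfolding cycle_list_def using cycle_len_pos[of y] by simp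

lemma hd_cycle_list: "hd (cycle_list y) = \<pi> y"
  unfolding cycle_list_def using cycle_len_pos[of y] by (simp add: upt_conv_Cons del: upt_Suc)

lemma last_cycle_list: "last (cycle_list y) = y"
  unfolding cycle_list_def using cycle_len_pos[of y] funpow_cycle_len[of y] by simp

lemma linked_cycle_list:
  assumes "\<forall>i\<in>orb \<pi> y. i \<noteq> y \<longrightarrow> c i = Some (\<pi> i)" and "c y = e"
  shows "linked c (cycle_list y) e"
  unfolding cycle_list_def
proof (rule linked_map_upt)
  show "\<forall>j. 1 \<le> j \<and> j < cycle_len y \<longrightarrow> c ((\<pi> ^^ j) y) = Some ((\<pi> ^^ Suc j) y)"
    using assms(1) funpow_dist1_least[of _ \<pi> y y] unfolding orb_def cycle_len_def by auto
qed (use assms cycle_len_pos[of y] funpow_cycle_len[of y] in auto)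

end

section \<open>OptPlanLOR: the invariant of the simulation\<close>

context lor
begin

definition unstarted :: "nat set \<Rightarrow> nat set" where
  "unstarted st = {y \<in> cycmins \<pi> m. y \<notin> st}"

definition first_min :: nat where
  "first_min = Min (cycmins \<pi> m)"

definition misplaced :: "lstate \<Rightarrow> nat" where
  "misplaced s = card {i\<in>{1..m}. fst s i \<noteq> Some i}"

text \<open>In a run of \<^const>\<open>opt_run\<close> from state \<open>s\<close> at position \<open>x\<close>, \<open>st\<close> is the set of minima
  of the started cycles, \<open>F\<close> the rightmost cell reached so far and \<open>path\<close> the list of
  cells the end-effector still has to visit to close the started cycles: it holds the label
  of the first of them, each of them holds the label of the next one, and the last one,
  the minimum of the first cycle, is empty.\<close>

definition started_upto :: "nat set \<Rightarrow> nat \<Rightarrow> bool" where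
  "started_upto st F \<longleftrightarrow> st \<subseteq> cycmins \<pi> m \<and> (\<forall>y\<in>cycmins \<pi> m. y \<in> st \<longleftrightarrow> y \<le> F)"

definition cells_inv :: "lstate \<Rightarrow> nat set \<Rightarrow> nat \<Rightarrow> nat list \<Rightarrow> bool" where
  "cells_inv s st F path \<longleftrightarrow>
    (\<forall>i. i \<notin> {1..m} \<longrightarrow> fst s i = None) \<and>
    (\<forall>i\<in>{1..m}. \<pi> i = i \<longrightarrow> fst s i = Some i \<and> i \<notin> set path) \<and>
    (\<forall>i\<in>displaced. cmin \<pi> i \<notin> st \<longrightarrow> fst s i = Some (\<pi> i) \<and> i \<notin> set path) \<and>
    (\<forall>i\<in>displaced. cmin \<pi> i \<in> st \<longrightarrow> i \<in> set path \<or> (fst s i = Some i \<and> i \<le> F)) \<and>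
    set path \<subseteq> {1..m} \<and>
    (\<forall>i\<in>set path. fst s i \<noteq> Some (\<pi> i) \<longrightarrow> i \<in> st)"

definition chain_inv :: "lstate \<Rightarrow> nat list \<Rightarrow> bool" where
  "chain_inv s path \<longleftrightarrow> distinct path \<and> linked (fst s) path None \<and>
     sorted_wrt (\<lambda>a b. gmax \<pi> m b \<le> gmax \<pi> m a) path \<and>
     snd s = (case path of [] \<Rightarrow> None | g # _ \<Rightarrow> Some g) \<and> (path \<noteq> [] \<longrightarrow> last path = first_min)"

definition carry_inv :: "nat \<Rightarrow> nat set \<Rightarrow> nat \<Rightarrow> nat \<Rightarrow> bool" where
  "carry_inv x st F g \<longleftrightarrow> x \<in> displaced \<and> x \<le> F \<and>
     (unstarted st \<noteq> {} \<longrightarrow> gmax \<pi> m g = gmax \<pi> m x \<and> F \<le> gmax \<pi> m x \<and> (gmax \<pi> m F = F \<longrightarrow> x = F))"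

definition opt_inv :: "lstate \<Rightarrow> nat \<Rightarrow> nat set \<Rightarrow> nat \<Rightarrow> nat list \<Rightarrow> bool" where
  "opt_inv s x st F path \<longleftrightarrow> started_upto st F \<and> cells_inv s st F path \<and> chain_inv s path \<and>
     (case snd s of
        None \<Rightarrow> (st = {} \<and> x = 1 \<and> F = 0) \<or> (unstarted st = {} \<and> st \<noteq> {} \<and> x = first_min)
      | Some g \<Rightarrow> carry_inv x st F g)"

lemma finite_unstarted[simp]: "finite (unstarted st)"
  unfolding unstarted_def by simp

lemma card_unstarted_insert:
  assumes "y \<in> unstarted st" shows "card (unstarted (insert y st)) < card (unstarted st)"
proof -
  have "unstarted (insert y st) = unstarted st - {y}" unfolding unstarted_def by auto
  then show ?thesis using card_Diff1_less[OF finite_unstarted assms] by simp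
qed

lemma first_min_le: "y \<in> cycmins \<pi> m \<Longrightarrow> first_min \<le> y"
  unfolding first_min_def by simp

lemma first_min_in: "cycmins \<pi> m \<noteq> {} \<Longrightarrow> first_min \<in> cycmins \<pi> m"
  unfolding first_min_def by (rule Min_in) auto

lemma first_min_le_displaced: "i \<in> displaced \<Longrightarrow> first_min \<le> i"
  using first_min_le[OF cmin_in_cycmins[of i]] cmin_self[of i] by auto

lemma misplaced_upd_same:
  assumes "t \<in> {1..m}" and "fst s t \<noteq> Some t" and "v \<noteq> Some t"
  shows "misplaced ((fst s)(t := v), h) = misplaced s"
proof -
  have "{i\<in>{1..m}. ((fst s)(t := v)) i \<noteq> Some i} = {i\<in>{1..m}. fst s i \<noteq> Some i}"
    using assms by auto
  then show ?thesis unfolding misplaced_def by simp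
qed

lemma misplaced_upd_placed:
  assumes "t \<in> {1..m}" and "fst s t \<noteq> Some t"
  shows "Suc (misplaced ((fst s)(t := Some t), h)) = misplaced s"
proof -
  have e: "{i\<in>{1..m}. ((fst s)(t := Some t)) i \<noteq> Some i} = {i\<in>{1..m}. fst s i \<noteq> Some i} - {t}"
    by auto
  have "t \<in> {i\<in>{1..m}. fst s i \<noteq> Some i}" using assms by simp
  then show ?thesis unfolding misplaced_def fst_conv e by (rule card_Suc_Diff1[rotated]) simp
qed

lemma misplaced_init: "misplaced (init \<pi> m) = card displaced"
  unfolding misplaced_def init_def by (rule arg_cong[where f=card]) auto

lemma cells_inv_path: "cells_inv s st F path \<Longrightarrow> i \<in> set path \<Longrightarrow> i \<in> displaced \<and> cmin \<pi> i \<in> st"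
  unfolding cells_inv_def by blast

lemma started_upto_unstarted_gt: "started_upto st F \<Longrightarrow> y \<in> unstarted st \<Longrightarrow> F < y"
  unfolding started_upto_def unstarted_def by auto

lemma cells_inv_final:
  assumes I: "cells_inv s st F []" and h: "snd s = None" and U: "unstarted st = {}"
  shows "s = goal m"
proof -
  have "fst s i = fst (goal m) i" for i
  proof (cases "i \<in> displaced")
    case True
    then have "cmin \<pi> i \<in> st" using cmin_in_cycmins U unfolding unstarted_def by blast
    then show ?thesis using I True unfolding cells_inv_def goal_def by simp
  qed (use I in \<open>auto simp: cells_inv_def goal_def\<close>)
  then have "fst s = fst (goal m)" by (rule ext)
  then show ?thesis using h by (simp add: prod_eq_iff goal_def)
qed

lemma opt_inv_init: "opt_inv (init \<pi> m) 1 {} 0 []"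
proof -
  have "started_upto {} 0" unfolding started_upto_def by (auto dest: cycmins_displaced)
  moreover have "cells_inv (init \<pi> m) {} 0 []" unfolding cells_inv_def init_def by simp
  moreover have "chain_inv (init \<pi> m) []" unfolding chain_inv_def init_def by simp
  ultimately show ?thesis unfolding opt_inv_def by (simp add: init_def)
qed

lemma started_upto_insert:
  assumes I: "started_upto st F" and y: "y \<in> unstarted st" and ymin: "\<forall>z\<in>unstarted st. y \<le> z"
  shows "started_upto (insert y st) y"
proof -
  have "z \<in> insert y st \<longleftrightarrow> z \<le> y" if z: "z \<in> cycmins \<pi> m" for z
  proof
    assume "z \<in> insert y st"
    then show "z \<le> y" using I z started_upto_unstarted_gt[OF I y] unfolding started_upto_def by auto
  next
    assume "z \<le> y"
    show "z \<in> insert y st"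
    proof (rule ccontr)
      assume "z \<notin> insert y st"
      then have "z \<in> unstarted st" "z \<noteq> y" using z unfolding unstarted_def by auto
      then show False using ymin \<open>z \<le> y\<close> by fastforce
    qed
  qed
  then show ?thesis using I y unfolding started_upto_def unstarted_def by auto
qed

lemma cells_invD:
  assumes "cells_inv s st F path"
  shows cells_inv_outside: "i \<notin> {1..m} \<Longrightarrow> fst s i = None"
    and cells_inv_fixed: "i \<in> {1..m} \<Longrightarrow> \<pi> i = i \<Longrightarrow> fst s i = Some i \<and> i \<notin> set path"
    and cells_inv_unstarted:
      "i \<in> displaced \<Longrightarrow> cmin \<pi> i \<notin> st \<Longrightarrow> fst s i = Some (\<pi> i) \<and> i \<notin> set path"
    and cells_inv_started:
      "i \<in> displaced \<Longrightarrow> cmin \<pi> i \<in> st \<Longrightarrow> i \<in> set path \<or> (fst s i = Some i \<and> i \<le> F)"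
    and cells_inv_path_cells: "set path \<subseteq> {1..m}"
    and cells_inv_parked: "i \<in> set path \<Longrightarrow> fst s i \<noteq> Some (\<pi> i) \<Longrightarrow> i \<in> st"
  using assms unfolding cells_inv_def by simp_all

lemma cells_inv_start_cycle:
  assumes I: "cells_inv s st F path" and S: "started_upto st F" and y: "y \<in> unstarted st"
  shows "cells_inv (pns y s) (insert y st) y (cycle_list y @ path)"
proof -
  define c where "c = fst s"
  have ycm: "y \<in> cycmins \<pi> m" and yst: "y \<notin> st" using y unfolding unstarted_def by auto
  have yD: "y \<in> displaced" and cy: "cmin \<pi> y = y" using ycm cycmins_displaced cycmins_cmin by auto
  have Fy: "F < y" by (rule started_upto_unstarted_gt[OF S y])
  note D = cells_invD[OF I, folded c_def]
  have cyu: "c y = Some (\<pi> y)" and ynp: "y \<notin> set path"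
    using D(3)[OF yD] cy yst by auto
  have orb_iff: "i \<in> orb \<pi> y \<longleftrightarrow> cmin \<pi> i = y" if "i \<in> displaced" for i
    using in_orb_iff_cmin[OF ycm that] .
  have orb_cells: "c i = Some (\<pi> i)" if "i \<in> orb \<pi> y" for i
  proof -
    have "i \<in> displaced" using orb_displaced[OF yD] that by blast
    then show ?thesis using D(3) that orb_iff yst by blast
  qed
  have s': "pns y s = (c(y := snd s), Some (\<pi> y))" using cyu unfolding c_def pns_alt by simp
  show ?thesis
    unfolding cells_inv_def s' fst_conv set_append set_cycle_list
  proof (intro conjI ballI allI impI)
    fix i assume "i \<notin> {1..m}"
    then show "(c(y := snd s)) i = None" using D(1) yD by auto
  next
    fix i assume i: "i \<in> {1..m}" "\<pi> i = i"
    then have "i \<noteq> y" "i \<notin> orb \<pi> y" using yD orb_displaced[OF yD] by auto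
    then show "(c(y := snd s)) i = Some i" "i \<notin> orb \<pi> y \<union> set path" using D(2)[OF i] by auto
  next
    fix i assume i: "i \<in> displaced" "cmin \<pi> i \<notin> insert y st"
    then have "i \<noteq> y" "i \<notin> orb \<pi> y" using cy orb_iff by auto
    then show "(c(y := snd s)) i = Some (\<pi> i)" "i \<notin> orb \<pi> y \<union> set path"
      using D(3) i by auto
  next
    fix i assume i: "i \<in> displaced" "cmin \<pi> i \<in> insert y st"
    show "i \<in> orb \<pi> y \<union> set path \<or> (c(y := snd s)) i = Some i \<and> i \<le> y"
    proof (cases "cmin \<pi> i = y")
      case True
      then show ?thesis using orb_iff[OF i(1)] by simp
    next
      case False
      then have "i \<in> set path \<or> (c i = Some i \<and> i \<le> F)" using D(4) i by simp
      moreover have "c i = Some i \<Longrightarrow> i \<noteq> y" using cyu yD by auto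
      ultimately show ?thesis using Fy by auto
    qed
  next
    show "orb \<pi> y \<union> set path \<subseteq> {1..m}" using orb_subset yD D(5) by auto
  next
    fix i assume i: "i \<in> orb \<pi> y \<union> set path" "(c(y := snd s)) i \<noteq> Some (\<pi> i)"
    show "i \<in> insert y st"
    proof (cases "i = y")
      case False
      then have "c i \<noteq> Some (\<pi> i)" using i by simp
      then show ?thesis using orb_cells D(6) i by auto
    qed simp
  qed
qed

lemma chain_invD:
  assumes "chain_inv s path"
  shows "distinct path" and "linked (fst s) path None"
    and "sorted_wrt (\<lambda>a b. gmax \<pi> m b \<le> gmax \<pi> m a) path"
    and "snd s = (case path of [] \<Rightarrow> None | g # _ \<Rightarrow> Some g)"
    and "path \<noteq> [] \<Longrightarrow> last path = first_min"
  using assms unfolding chain_inv_def by simp_all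

lemma chain_inv_start_cycle:
  assumes I: "cells_inv s st F path" and C: "chain_inv s path" and y: "y \<in> unstarted st"
    and first: "path = [] \<Longrightarrow> y = first_min"
    and below: "\<forall>b\<in>set path. gmax \<pi> m b \<le> gmax \<pi> m y"
  shows "chain_inv (pns y s) (cycle_list y @ path)"
proof -
  define c where "c = fst s"
  note D = chain_invD[OF C, folded c_def]
  have ycm: "y \<in> cycmins \<pi> m" and yst: "y \<notin> st" using y unfolding unstarted_def by auto
  have yD: "y \<in> displaced" using ycm cycmins_displaced by auto
  have orb_cells: "c i = Some (\<pi> i)" if "i \<in> orb \<pi> y" for i
  proof -
    have iD: "i \<in> displaced" using orb_displaced[OF yD] that by blast
    then have "cmin \<pi> i = y" using in_orb_iff_cmin[OF ycm iD] that by simp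
    then show ?thesis using cells_inv_unstarted[OF I iD] yst unfolding c_def by simp
  qed
  have path_off: "i \<notin> orb \<pi> y" if "i \<in> set path" for i
  proof
    assume "i \<in> orb \<pi> y"
    then have "cmin \<pi> i = y" using in_orb_iff_cmin[OF ycm] cells_inv_path[OF I that] by blast
    then show False using cells_inv_path[OF I that] yst by simp
  qed
  have s': "pns y s = (c(y := snd s), Some (\<pi> y))"
    using orb_cells[OF self_in_orb] unfolding c_def pns_alt by simp
  have cyc: "linked (c(y := snd s)) (cycle_list y) (snd s)"
    by (rule linked_cycle_list) (simp_all add: orb_cells)
  have "linked (c(y := snd s)) (cycle_list y @ path) None"
  proof (cases path)
    case Nil
    then show ?thesis using cyc D(4) by simp
  next
    case (Cons g rest)
    have ynp: "y \<notin> set path" using path_off self_in_orb by blast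
    have "linked (c(y := snd s)) (g # rest) None" using linked_upd[OF ynp] D(2) Cons by simp
    moreover have "linked (c(y := snd s)) (cycle_list y) (Some g)" using cyc D(4) Cons by simp
    ultimately show ?thesis unfolding Cons linked_append by simp
  qed
  moreover have "sorted_wrt (\<lambda>a b. gmax \<pi> m b \<le> gmax \<pi> m a) (cycle_list y @ path)"
    using gmax_orb[OF yD] unfolding set_cycle_list[symmetric]
    by (intro sorted_wrt_const_append[OF _ below D(3)]) blast
  moreover have "distinct (cycle_list y @ path)"
    unfolding distinct_append set_cycle_list using distinct_cycle_list D(1) path_off by blast
  moreover have "last (cycle_list y @ path) = first_min"
  proof (cases "path = []")
    case True then show ?thesis using first last_cycle_list[of y] by simp
  next
    case False then show ?thesis using D(5) by simp
  qed
  moreover have "(case cycle_list y @ path of [] \<Rightarrow> None | g # _ \<Rightarrow> Some g) = Some (\<pi> y)"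
    using cycle_list_ne[of y] hd_cycle_list[of y] by (cases "cycle_list y") auto
  ultimately show ?thesis unfolding chain_inv_def s' fst_conv snd_conv by simp
qed

lemma opt_inv_start_cycle:
  assumes inv: "opt_inv s x st F path" and y: "y \<in> unstarted st" and ymin: "\<forall>z\<in>unstarted st. y \<le> z"
    and gy: "\<And>g. snd s = Some g \<Longrightarrow> gmax \<pi> m g \<le> gmax \<pi> m y"
  shows "opt_inv (pns y s) y (insert y st) y (cycle_list y @ path)"
    and "misplaced (pns y s) = misplaced s"
proof -
  have S: "started_upto st F" and I: "cells_inv s st F path" and C: "chain_inv s path"
    using inv unfolding opt_inv_def by auto
  have ycm: "y \<in> cycmins \<pi> m" and yst: "y \<notin> st" using y unfolding unstarted_def by auto
  have yD: "y \<in> displaced" using ycm cycmins_displaced by auto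
  have cyu: "fst s y = Some (\<pi> y)"
    using I yD yst cycmins_cmin[OF ycm] unfolding cells_inv_def by auto
  have first: "y = first_min" if "path = []"
  proof -
    have "snd s = None" using C that unfolding chain_inv_def by simp
    then have "st = {}" using inv y unfolding opt_inv_def by auto
    then show ?thesis using ymin ycm first_min_le first_min_in unfolding unstarted_def
      by (metis empty_iff le_antisym mem_Collect_eq)
  qed
  have below: "\<forall>b\<in>set path. gmax \<pi> m b \<le> gmax \<pi> m y"
  proof (cases path)
    case (Cons g rest)
    then have "snd s = Some g" "\<forall>b\<in>set rest. gmax \<pi> m b \<le> gmax \<pi> m g"
      using C unfolding chain_inv_def by auto
    then show ?thesis using gy Cons by fastforce
  qed simp
  have "carry_inv y (insert y st) y (\<pi> y)"
    unfolding carry_inv_def using yD gmax_pi[OF yD] gmax_self[of y] by simp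
  then show "opt_inv (pns y s) y (insert y st) y (cycle_list y @ path)"
    unfolding opt_inv_def
    using started_upto_insert[OF S y ymin] cells_inv_start_cycle[OF I S y]
      chain_inv_start_cycle[OF I C y first below] cyu by (simp add: pns_alt)
  have "snd s \<noteq> Some y"
    using C I yst cycmins_cmin[OF ycm] cells_inv_path[of s st F path y]
    unfolding chain_inv_def by (auto split: list.splits)
  then show "misplaced (pns y s) = misplaced s"
    using misplaced_upd_same[of y s "snd s"] cyu yD unfolding pns_alt by auto
qed

end

context lor
begin

lemma chain_inv_tl:
  assumes C: "chain_inv s (g # rest)"
  shows "chain_inv (pns g s) rest" and "fst s g = (case rest of [] \<Rightarrow> None | r # _ \<Rightarrow> Some r)"
proof -
  show cg: "fst s g = (case rest of [] \<Rightarrow> None | r # _ \<Rightarrow> Some r)"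
    using chain_invD(2)[OF C] by (cases rest) auto
  note D = chain_invD[OF C]
  have gnr: "g \<notin> set rest" using D(1) by simp
  have "linked ((fst s)(g := Some g)) rest None"
    using linked_tl[OF D(2)] linked_upd[OF gnr] by simp
  moreover have "sorted_wrt (\<lambda>a b. gmax \<pi> m b \<le> gmax \<pi> m a) rest" using D(3) by simp
  moreover have "rest \<noteq> [] \<Longrightarrow> last rest = first_min" using D(5) by simp
  ultimately show "chain_inv (pns g s) rest"
    using D(1,4) cg unfolding chain_inv_def pns_alt by simp
qed

lemma cells_inv_move:
  assumes I: "cells_inv s st F (g # rest)" and C: "chain_inv s (g # rest)"
  shows "cells_inv (pns g s) st (max F g) rest"
proof -
  define c where "c = fst s"
  have h: "snd s = Some g" and gnr: "g \<notin> set rest" using chain_invD[OF C] by auto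
  have gD: "g \<in> displaced" and gst: "cmin \<pi> g \<in> st" using cells_inv_path[OF I] by auto
  note D = cells_invD[OF I, folded c_def]
  have s': "pns g s = (c(g := Some g), c g)" using h unfolding c_def pns_alt by simp
  show ?thesis
    unfolding cells_inv_def s' fst_conv
  proof (intro conjI ballI allI impI)
    fix i assume "i \<notin> {1..m}"
    then show "(c(g := Some g)) i = None" using D(1) gD by auto
  next
    fix i assume i: "i \<in> {1..m}" "\<pi> i = i"
    then have "i \<noteq> g" using gD by auto
    then show "(c(g := Some g)) i = Some i" "i \<notin> set rest" using D(2)[OF i] by auto
  next
    fix i assume i: "i \<in> displaced" "cmin \<pi> i \<notin> st"
    then have "i \<noteq> g" using gst by auto
    then show "(c(g := Some g)) i = Some (\<pi> i)" "i \<notin> set rest" using D(3)[OF i] by auto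
  next
    fix i assume i: "i \<in> displaced" "cmin \<pi> i \<in> st"
    show "i \<in> set rest \<or> (c(g := Some g)) i = Some i \<and> i \<le> max F g"
    proof (cases "i = g")
      case False
      then show ?thesis using D(4)[OF i] by auto
    qed simp
  next
    show "set rest \<subseteq> {1..m}" using D(5) by simp
  next
    fix i assume i: "i \<in> set rest" "(c(g := Some g)) i \<noteq> Some (\<pi> i)"
    then have "i \<noteq> g" using gnr by auto
    then show "i \<in> st" using D(6) i by simp
  qed
qed

lemma misplaced_move:
  assumes I: "cells_inv s st F (g # rest)" and C: "chain_inv s (g # rest)"
  shows "Suc (misplaced (pns g s)) = misplaced s"
proof -
  have "fst s g \<noteq> Some g" using chain_inv_tl(2)[OF C] chain_invD(1)[OF C] by (cases rest) auto
  moreover have "snd s = Some g" using chain_invD(4)[OF C] by simp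
  ultimately show ?thesis using misplaced_upd_placed[of g s] cells_inv_path[OF I, of g]
    unfolding pns_alt by simp
qed

text \<open>If the chain leaves the group of the carried item, every cycle reached so far is closed
  before \<open>F\<close>, so \<open>F\<close> is the right end of a group.\<close>
lemma gmax_frontier_if_chain_leaves_group:
  assumes S: "started_upto st F" and I: "cells_inv s st F (g # rest)" and C: "chain_inv s (g # rest)"
    and leaves: "rest = [] \<or> gmax \<pi> m (hd rest) \<noteq> gmax \<pi> m g"
  shows "gmax \<pi> m F = F"
proof -
  note I' = I[unfolded cells_inv_def]
  have gD: "g \<in> displaced" using cells_inv_path[OF I] by auto
  have "fst s g \<noteq> Some (\<pi> g)"
    using chain_inv_tl(2)[OF C] leaves gmax_pi[OF gD] by (auto split: list.splits)
  then have "g \<in> st" using I' by simp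
  then have gF: "g \<le> F" using S unfolding started_upto_def by auto
  have path_le: "v \<le> F" if v: "v \<in> set (g # rest)" for v
  proof (cases "v = g")
    case False
    then obtain r rr where rs: "rest = r # rr" using v by (cases rest) auto
    have rD: "r \<in> displaced" using cells_inv_path[OF I] rs by simp
    have sorted: "\<forall>b\<in>set rest. gmax \<pi> m b \<le> gmax \<pi> m g" "\<forall>b\<in>set rr. gmax \<pi> m b \<le> gmax \<pi> m r"
      using C rs unfolding chain_inv_def by auto
    then have "gmax \<pi> m r < gmax \<pi> m g" using leaves rs by (simp add: order_less_le)
    then have "gmax \<pi> m r < g" by (rule lt_if_gmax_lt[OF rD gD])
    moreover have "gmax \<pi> m v \<le> gmax \<pi> m r" using sorted v False rs by auto
    ultimately show ?thesis using gmax_self[of v] gF by linarith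
  qed (use gF in simp)
  show ?thesis
  proof (rule gmax_fixed_if_no_crossing, intro ballI impI)
    fix w assume w: "w \<in> displaced" and "cmin \<pi> w \<le> F"
    then have "cmin \<pi> (cmax \<pi> w) \<in> st"
      using cmin_in_cycmins S cmin_orb[OF cmax_in] unfolding started_upto_def by auto
    moreover have "cmax \<pi> w \<in> displaced" using orb_displaced[OF w] cmax_in by blast
    ultimately show "cmax \<pi> w \<le> F" using I' path_le by blast
  qed
qed

lemma unstarted_empty_at_frontier:
  assumes S: "started_upto st F" and K: "carry_inv x st F g"
    and not_right: "\<not> (x = gmax \<pi> m x \<and> {y \<in> cycmins \<pi> m. y \<notin> st \<and> x < y} \<noteq> {})"
    and gF: "gmax \<pi> m F = F"
  shows "unstarted st = {}"
proof (rule ccontr)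
  assume U: "unstarted st \<noteq> {}"
  then have xF: "x = F" using K gF unfolding carry_inv_def by auto
  obtain z where "z \<in> unstarted st" using U by blast
  then have "z \<in> {y \<in> cycmins \<pi> m. y \<notin> st \<and> x < y}"
    using started_upto_unstarted_gt[OF S] xF unfolding unstarted_def by auto
  then show False using not_right xF gF by auto
qed

lemma started_upto_move:
  assumes S: "started_upto st F" and K: "carry_inv x st F g" and gD: "g \<in> displaced"
    and gst: "cmin \<pi> g \<in> st"
    and not_inside: "\<not> ({y \<in> cycmins \<pi> m. y \<notin> st \<and> y \<in> grp \<pi> m g} \<noteq> {} \<and>
               min x g < Min {y \<in> cycmins \<pi> m. y \<notin> st \<and> y \<in> grp \<pi> m g} \<and>
               Min {y \<in> cycmins \<pi> m. y \<notin> st \<and> y \<in> grp \<pi> m g} < max x g)"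
  shows "started_upto st (max F g)"
proof (cases "g \<le> F")
  case False
  let ?U = "{y \<in> cycmins \<pi> m. y \<notin> st \<and> y \<in> grp \<pi> m g}"
  have "z \<in> st" if z: "z \<in> cycmins \<pi> m" and zg: "z \<le> g" for z
  proof (rule ccontr)
    assume zst: "z \<notin> st"
    then have zU: "z \<in> unstarted st" using z unfolding unstarted_def by simp
    have xD: "x \<in> displaced" and xF: "x \<le> F" and e: "gmax \<pi> m x = gmax \<pi> m g"
      using K zU unfolding carry_inv_def by auto
    have xz: "x < z" using started_upto_unstarted_gt[OF S zU] xF by simp
    have "z \<noteq> g" using zst gst cycmins_cmin[OF z] by auto
    then have "z < g" using zg by simp
    then have "gmax \<pi> m z = gmax \<pi> m x"
      using gmax_between[OF xD cycmins_displaced[OF z] xz _ e] by simp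
    then have zin: "z \<in> ?U" using z zst grp_if_gmax_eq[of g z] e by simp
    then have "Min ?U \<in> ?U" "Min ?U \<le> z" using Min_in[of ?U] by auto
    moreover have "F < Min ?U" using \<open>Min ?U \<in> ?U\<close> S unfolding started_upto_def by auto
    ultimately show False using not_inside zin xz \<open>z < g\<close> xF by (auto simp: min_def max_def)
  qed
  then show ?thesis using S False unfolding started_upto_def by (auto simp: max_def)
qed (use S in \<open>simp add: max_def\<close>)

lemma opt_inv_move:
  assumes inv: "opt_inv s x st F path" and h: "snd s = Some g"
    and not_right: "\<not> (x = gmax \<pi> m x \<and> {y \<in> cycmins \<pi> m. y \<notin> st \<and> x < y} \<noteq> {})"
    and not_inside: "\<not> ({y \<in> cycmins \<pi> m. y \<notin> st \<and> y \<in> grp \<pi> m g} \<noteq> {} \<and>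
               min x g < Min {y \<in> cycmins \<pi> m. y \<notin> st \<and> y \<in> grp \<pi> m g} \<and>
               Min {y \<in> cycmins \<pi> m. y \<notin> st \<and> y \<in> grp \<pi> m g} < max x g)"
  obtains rest where "path = g # rest" and "opt_inv (pns g s) g st (max F g) rest"
    and "Suc (misplaced (pns g s)) = misplaced s"
proof -
  have S: "started_upto st F" and I: "cells_inv s st F path" and C: "chain_inv s path"
    and K: "carry_inv x st F g"
    using inv h unfolding opt_inv_def by auto
  obtain rest where pr: "path = g # rest"
    using C h unfolding chain_inv_def by (cases path) auto
  have gD: "g \<in> displaced" and gst: "cmin \<pi> g \<in> st" using cells_inv_path[OF I] pr by auto
  have closed: "unstarted st = {}" if "rest = [] \<or> gmax \<pi> m (hd rest) \<noteq> gmax \<pi> m g"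
    using unstarted_empty_at_frontier[OF S K not_right]
      gmax_frontier_if_chain_leaves_group[OF S I[unfolded pr] C[unfolded pr] that] .
  have C': "chain_inv (pns g s) rest" and cg: "fst s g = (case rest of [] \<Rightarrow> None | r # _ \<Rightarrow> Some r)"
    using chain_inv_tl C pr by auto
  have "case snd (pns g s) of
        None \<Rightarrow> (st = {} \<and> g = 1 \<and> max F g = 0) \<or> (unstarted st = {} \<and> st \<noteq> {} \<and> g = first_min)
      | Some r \<Rightarrow> carry_inv g st (max F g) r"
  proof (cases rest)
    case Nil
    then show ?thesis using closed gst C cg pr unfolding chain_inv_def pns_alt by auto
  next
    case (Cons r rr)
    have "carry_inv g st (max F g) r"
      unfolding carry_inv_def
    proof (intro conjI impI)
      assume U: "unstarted st \<noteq> {}"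
      show "gmax \<pi> m r = gmax \<pi> m g" using closed U Cons by auto
      show "max F g \<le> gmax \<pi> m g" using K U gmax_self[of g] unfolding carry_inv_def by simp
      show "g = max F g" if "gmax \<pi> m (max F g) = max F g"
        using that unstarted_empty_at_frontier[OF S K not_right] U by (auto simp: max_def split: if_splits)
    qed (use gD in simp_all)
    then show ?thesis using cg Cons by (simp add: pns_alt)
  qed
  then have "opt_inv (pns g s) g st (max F g) rest"
    unfolding opt_inv_def
    using started_upto_move[OF S K gD gst not_inside] cells_inv_move[OF I[unfolded pr] C[unfolded pr]] C'
    by simp
  then show ?thesis using that pr misplaced_move I C by blast
qed

end

context lor
begin

text \<open>The number of crossings of cut \<open>k\<close> that the rest of the run may still spend: the
  potential of the cut, plus \<open>2\<close> if the cut carries no flow but an unstarted cycle lies to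
  its right beyond the rightmost cell \<open>F\<close> reached so far, plus the way to the first cycle
  and back (or only back) for the cuts left of it.\<close>
definition crossing_budget :: "nat \<Rightarrow> lstate \<Rightarrow> nat \<Rightarrow> nat set \<Rightarrow> nat \<Rightarrow> nat" where
  "crossing_budget k s x st F = cut_potential m k s x +
     (if first_min \<le> k \<and> cut_flow k = 0 \<and> F \<le> k \<and> (\<exists>y\<in>unstarted st. k < y) then 2 else 0) +
     (if k < first_min then (if st = {} then 2 else 1) else 0)"

lemma crossing_budget_carry:
  assumes h: "snd s = Some g" and t: "t \<in> {1..m}" and FF: "F \<le> F'"
    and UU: "unstarted st' \<subseteq> unstarted st" and st: "st \<noteq> {}" and st': "st' \<noteq> {}"
    and side: "crosses k x t = 1 \<Longrightarrow> (t \<le> k) = (g \<le> k)"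
  shows "crosses k x t + crossing_budget k (pns t s) t st' F' \<le> crossing_budget k s x st F"
proof -
  have "cut_potential m k (pns t s) t = cut_potential m k s t" by (rule cut_potential_pns[OF t])
  moreover have "crosses k x t + cut_potential m k s t \<le> cut_potential m k s x"
    by (rule cut_potential_carry[OF h side])
  ultimately show ?thesis unfolding crossing_budget_def using FF UU st st' by auto
qed

text \<open>Parking at the minimum \<open>y\<close> of the next group crosses the cuts between \<open>x\<close> and \<open>y\<close>
  in the wrong direction for the carried item; these cuts carry no flow, so the extra
  crossings are paid by the second summand of the budget.\<close>
lemma crossing_budget_park_right:
  assumes h: "snd s = Some g" and y: "y \<in> {1..m}" and gx: "g \<le> x" and Fx: "F \<le> x"
    and xy: "x < y" and first: "first_min \<le> x" and yU: "y \<in> unstarted st"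
    and no_flow: "\<forall>k. x \<le> k \<and> k < y \<longrightarrow> cut_flow k = 0"
    and UU: "unstarted st' \<subseteq> unstarted st" and st: "st \<noteq> {}" and st': "st' \<noteq> {}"
  shows "crosses k x y + crossing_budget k (pns y s) y st' y \<le> crossing_budget k s x st F"
proof -
  have pp: "cut_potential m k (pns y s) y = cut_potential m k s y" by (rule cut_potential_pns[OF y])
  show ?thesis
  proof (cases "x \<le> k \<and> k < y")
    case True
    then have "wrong_side k x (snd s) = 0" "wrong_side k y (snd s) = 1"
      using h gx unfolding wrong_side_def by auto
    then have "cut_potential m k s y = cut_potential m k s x + 1"
      using cut_potential_move_hand[of m k s y x] by simp
    then show ?thesis
      using True first no_flow Fx yU st st' unfolding crossing_budget_def pp crosses_def by auto
  next
    case False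
    then have c0: "crosses k x y = 0" unfolding crosses_def using xy by auto
    then have "wrong_side k x (snd s) = wrong_side k y (snd s)"
      using crosses_eq_0_iff[of k x y] unfolding wrong_side_def by (simp split: option.splits)
    then have "cut_potential m k s y = cut_potential m k s x"
      using cut_potential_move_hand[of m k s y x] by simp
    then show ?thesis using c0 Fx xy UU st st' unfolding crossing_budget_def pp by auto
  qed
qed

lemma cut_flow_zero_before_next_group:
  assumes S: "started_upto st F" and x: "x \<in> displaced" and gx: "gmax \<pi> m x = x" and Fx: "F \<le> x"
    and ymin: "\<forall>z\<in>{y \<in> cycmins \<pi> m. y \<notin> st \<and> x < y}. y \<le> z"
    and xk: "x \<le> k" and ky: "k < y"
  shows "cut_flow k = 0"
proof -
  have False if i: "i \<in> {1..m}" "i \<le> k" "k < \<pi> i" for i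
  proof -
    let ?a = "cmin \<pi> i"
    have acm: "?a \<in> cycmins \<pi> m" using cmin_in_cycmins i by simp
    consider "?a \<le> x" | "x < ?a" "?a \<in> st" | "x < ?a" "?a \<notin> st" by linarith
    then show False
    proof cases
      case 1
      then have "cmax \<pi> ?a \<le> gmax \<pi> m x"
        using cycle_ends_before_gmax[OF x cycmins_displaced[OF acm]] gx by simp
      then show False using pi_le_cmax[of i] i gx xk by simp
    next
      case 2
      then show False using S acm Fx unfolding started_upto_def by auto
    next
      case 3
      then show False using ymin acm cmin_self[of i] i ky by fastforce
    qed
  qed
  then show ?thesis unfolding cut_flow_def by auto
qed

definition finishes_within :: "nat list \<Rightarrow> lstate \<Rightarrow> nat \<Rightarrow> nat set \<Rightarrow> nat \<Rightarrow> bool" where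
  "finishes_within xs s x st F \<longleftrightarrow> set xs \<subseteq> {1..m} \<and> run xs s = goal m \<and>
     length xs \<le> misplaced s + card (unstarted st) \<and>
     (\<forall>k\<ge>1. crossings k x xs \<le> crossing_budget k s x st F)"

definition budgeted_step ::
    "lstate \<Rightarrow> nat \<Rightarrow> nat set \<Rightarrow> nat \<Rightarrow> nat \<Rightarrow> nat set \<Rightarrow> nat \<Rightarrow> nat list \<Rightarrow> bool" where
  "budgeted_step s x st F t st' F' path' \<longleftrightarrow> t \<in> {1..m} \<and> opt_inv (pns t s) t st' F' path' \<and>
     misplaced (pns t s) + card (unstarted st') < misplaced s + card (unstarted st) \<and>
     (\<forall>k\<ge>1. crosses k x t + crossing_budget k (pns t s) t st' F' \<le> crossing_budget k s x st F)"

lemma finishes_within_Cons: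
  assumes "budgeted_step s x st F t st' F' path'" and "finishes_within xs (pns t s) t st' F'"
  shows "finishes_within (t # xs) s x st F"
  unfolding finishes_within_def
proof (intro conjI allI impI)
  fix k :: nat assume k: "1 \<le> k"
  have "crossings k t xs \<le> crossing_budget k (pns t s) t st' F'"
    using assms(2) k unfolding finishes_within_def by simp
  moreover have "crosses k x t + crossing_budget k (pns t s) t st' F' \<le> crossing_budget k s x st F"
    using assms(1) k unfolding budgeted_step_def by simp
  ultimately show "crossings k x (t # xs) \<le> crossing_budget k s x st F" by simp
qed (use assms in \<open>auto simp: budgeted_step_def finishes_within_def\<close>)

lemma opt_run_Suc_Some:
  "snd s = Some g \<Longrightarrow> opt_run (Suc n) \<pi> m s x st =
    (if x = gmax \<pi> m x \<and> {y \<in> cycmins \<pi> m. y \<notin> st \<and> x < y} \<noteq> {}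
     then Min {y \<in> cycmins \<pi> m. y \<notin> st \<and> x < y} #
       opt_run n \<pi> m (pns (Min {y \<in> cycmins \<pi> m. y \<notin> st \<and> x < y}) s)
         (Min {y \<in> cycmins \<pi> m. y \<notin> st \<and> x < y}) (insert (Min {y \<in> cycmins \<pi> m. y \<notin> st \<and> x < y}) st)
     else if {y \<in> cycmins \<pi> m. y \<notin> st \<and> y \<in> grp \<pi> m g} \<noteq> {} \<and>
        min x g < Min {y \<in> cycmins \<pi> m. y \<notin> st \<and> y \<in> grp \<pi> m g} \<and>
        Min {y \<in> cycmins \<pi> m. y \<notin> st \<and> y \<in> grp \<pi> m g} < max x g
     then Min {y \<in> cycmins \<pi> m. y \<notin> st \<and> y \<in> grp \<pi> m g} #
       opt_run n \<pi> m (pns (Min {y \<in> cycmins \<pi> m. y \<notin> st \<and> y \<in> grp \<pi> m g}) s)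
         (Min {y \<in> cycmins \<pi> m. y \<notin> st \<and> y \<in> grp \<pi> m g})
         (insert (Min {y \<in> cycmins \<pi> m. y \<notin> st \<and> y \<in> grp \<pi> m g}) st)
     else g # opt_run n \<pi> m (pns g s) g st)"
  by (simp only: opt_run.simps(2) option.case Let_def)

lemma opt_run_start:
  assumes inv: "opt_inv s x st F path" and h: "snd s = None" and U: "unstarted st \<noteq> {}"
  shows "opt_run (Suc n) \<pi> m s x st = first_min # opt_run n \<pi> m (pns first_min s) first_min {first_min}"
    and "budgeted_step s x st F first_min {first_min} first_min (cycle_list first_min)"
proof -
  have st: "st = {}" "x = 1" "F = 0" using inv h U unfolding opt_inv_def by auto
  then have UU: "unstarted st = cycmins \<pi> m" unfolding unstarted_def by simp
  then have y: "first_min \<in> unstarted st" using first_min_in U by simp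
  have ym: "first_min \<in> {1..m}" using cycmins_displaced y UU by auto
  show "opt_run (Suc n) \<pi> m s x st = first_min # opt_run n \<pi> m (pns first_min s) first_min {first_min}"
    using h U UU st unfolding unstarted_def first_min_def by (simp add: Let_def)
  have ymin: "\<forall>z\<in>unstarted st. first_min \<le> z" using UU first_min_le by simp
  have "path = []" using chain_invD(4)[of s path] inv h unfolding opt_inv_def by (cases path) auto
  moreover have "\<And>g. snd s = Some g \<Longrightarrow> gmax \<pi> m g \<le> gmax \<pi> m first_min" using h by simp
  ultimately have start: "opt_inv (pns first_min s) first_min {first_min} first_min (cycle_list first_min)"
    "misplaced (pns first_min s) = misplaced s"
    using opt_inv_start_cycle[OF inv y ymin] st(1) by auto
  have "crosses k x first_min + crossing_budget k (pns first_min s) first_min {first_min} first_min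
      \<le> crossing_budget k s x st F" if k: "1 \<le> k" for k
  proof -
    have "cut_potential m k (pns first_min s) first_min = cut_potential m k s x"
      using cut_potential_pns[OF ym] cut_potential_move_hand[of m k s first_min x] h
      unfolding wrong_side_def by simp
    moreover have "unstarted {first_min} \<subseteq> unstarted st" unfolding unstarted_def st by auto
    ultimately show ?thesis using st k ym unfolding crossing_budget_def crosses_def by auto
  qed
  then show "budgeted_step s x st F first_min {first_min} first_min (cycle_list first_min)"
    unfolding budgeted_step_def using start ym card_unstarted_insert[OF y] st by auto
qed

end

context lor
begin

lemma opt_run_park_right:
  assumes inv: "opt_inv s x st F path" and h: "snd s = Some g"
    and right: "x = gmax \<pi> m x \<and> {y \<in> cycmins \<pi> m. y \<notin> st \<and> x < y} \<noteq> {}"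
  defines "y \<equiv> Min {y \<in> cycmins \<pi> m. y \<notin> st \<and> x < y}"
  shows "opt_run (Suc n) \<pi> m s x st = y # opt_run n \<pi> m (pns y s) y (insert y st)"
    and "budgeted_step s x st F y (insert y st) y (cycle_list y @ path)"
proof -
  let ?R = "{y \<in> cycmins \<pi> m. y \<notin> st \<and> x < y}"
  show "opt_run (Suc n) \<pi> m s x st = y # opt_run n \<pi> m (pns y s) y (insert y st)"
    unfolding opt_run_Suc_Some[OF h] if_P[OF right] y_def ..
  have S: "started_upto st F" and I: "cells_inv s st F path" and C: "chain_inv s path"
    and K: "carry_inv x st F g"
    using inv h unfolding opt_inv_def by auto
  have yR: "y \<in> ?R" unfolding y_def using right by (intro Min_in) auto
  have Rmin: "\<forall>z\<in>?R. y \<le> z" unfolding y_def by simp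
  have yU: "y \<in> unstarted st" and xy: "x < y" using yR unfolding unstarted_def by auto
  have xD: "x \<in> displaced" and xF: "x \<le> F" and Fx: "F \<le> x" and gx: "gmax \<pi> m g = x"
    using K yU right unfolding carry_inv_def by auto
  have ymin: "\<forall>z\<in>unstarted st. y \<le> z"
  proof
    fix z assume z: "z \<in> unstarted st"
    then have "z \<in> ?R" using started_upto_unstarted_gt[OF S z] xF unfolding unstarted_def by simp
    then show "y \<le> z" using Rmin by blast
  qed
  have ym: "y \<in> {1..m}" using yU cycmins_displaced unfolding unstarted_def by auto
  obtain rest where "path = g # rest" using chain_invD(4)[OF C] h by (cases path) auto
  then have st: "st \<noteq> {}" using cells_inv_path[OF I, of g] by auto
  have "gmax \<pi> m g' \<le> gmax \<pi> m y" if "snd s = Some g'" for g'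
    using that h gx xy gmax_self[of y] by simp
  note start = opt_inv_start_cycle[OF inv yU ymin this]
  have "crosses k x y + crossing_budget k (pns y s) y (insert y st) y \<le> crossing_budget k s x st F" for k
  proof (rule crossing_budget_park_right[OF h ym _ Fx xy _ yU])
    show "g \<le> x" using gmax_self[of g] gx by simp
    show "first_min \<le> x" using first_min_le_displaced[OF xD] .
    show "\<forall>k. x \<le> k \<and> k < y \<longrightarrow> cut_flow k = 0"
      using cut_flow_zero_before_next_group[OF S xD _ Fx Rmin] right by simp
    show "unstarted (insert y st) \<subseteq> unstarted st" unfolding unstarted_def by blast
  qed (use st in simp_all)
  then show "budgeted_step s x st F y (insert y st) y (cycle_list y @ path)"
    unfolding budgeted_step_def
    using start ym card_unstarted_insert[OF yU] by simp
qed

lemma opt_run_park_inside: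
  assumes inv: "opt_inv s x st F path" and h: "snd s = Some g"
    and not_right: "\<not> (x = gmax \<pi> m x \<and> {y \<in> cycmins \<pi> m. y \<notin> st \<and> x < y} \<noteq> {})"
    and inside: "{y \<in> cycmins \<pi> m. y \<notin> st \<and> y \<in> grp \<pi> m g} \<noteq> {} \<and>
        min x g < Min {y \<in> cycmins \<pi> m. y \<notin> st \<and> y \<in> grp \<pi> m g} \<and>
        Min {y \<in> cycmins \<pi> m. y \<notin> st \<and> y \<in> grp \<pi> m g} < max x g"
  defines "y \<equiv> Min {y \<in> cycmins \<pi> m. y \<notin> st \<and> y \<in> grp \<pi> m g}"
  shows "opt_run (Suc n) \<pi> m s x st = y # opt_run n \<pi> m (pns y s) y (insert y st)"
    and "budgeted_step s x st F y (insert y st) y (cycle_list y @ path)"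
proof -
  let ?U = "{y \<in> cycmins \<pi> m. y \<notin> st \<and> y \<in> grp \<pi> m g}"
  show "opt_run (Suc n) \<pi> m s x st = y # opt_run n \<pi> m (pns y s) y (insert y st)"
    unfolding opt_run_Suc_Some[OF h] if_not_P[OF not_right] if_P[OF inside] y_def ..
  have S: "started_upto st F" and I: "cells_inv s st F path" and C: "chain_inv s path"
    and K: "carry_inv x st F g"
    using inv h unfolding opt_inv_def by auto
  have yUU: "y \<in> ?U" unfolding y_def using inside by (intro Min_in) auto
  have Umin: "\<forall>z\<in>?U. y \<le> z" unfolding y_def by simp
  have yU: "y \<in> unstarted st" using yUU unfolding unstarted_def by auto
  have xD: "x \<in> displaced" and xF: "x \<le> F" and egx: "gmax \<pi> m x = gmax \<pi> m g"
    using K yU unfolding carry_inv_def by auto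
  have xy: "x < y" using started_upto_unstarted_gt[OF S yU] xF by simp
  have "y < max x g" using inside unfolding y_def by simp
  then have yg: "y < g" using xy by (simp add: max_def split: if_splits)
  obtain rest where "path = g # rest" using chain_invD(4)[OF C] h by (cases path) auto
  then have st: "st \<noteq> {}" using cells_inv_path[OF I, of g] by auto
  have ymin: "\<forall>z\<in>unstarted st. y \<le> z"
  proof
    fix z assume z: "z \<in> unstarted st"
    show "y \<le> z"
    proof (rule ccontr)
      assume "\<not> y \<le> z"
      have zD: "z \<in> displaced" using z cycmins_displaced unfolding unstarted_def by auto
      have "x < z" using started_upto_unstarted_gt[OF S z] xF by simp
      then have "gmax \<pi> m z = gmax \<pi> m x"
        using gmax_between[OF xD zD _ _ egx] \<open>\<not> y \<le> z\<close> yg by simp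
      then have "z \<in> ?U" using z grp_if_gmax_eq[of g z] egx unfolding unstarted_def by simp
      then show False using Umin \<open>\<not> y \<le> z\<close> by auto
    qed
  qed
  have "gmax \<pi> m g' \<le> gmax \<pi> m y" if "snd s = Some g'" for g'
    using that h gmax_eq[of y g] yUU by simp
  note start = opt_inv_start_cycle[OF inv yU ymin this]
  have ym: "y \<in> {1..m}" using yU cycmins_displaced unfolding unstarted_def by auto
  have "crosses k x y + crossing_budget k (pns y s) y (insert y st) y \<le> crossing_budget k s x st F" for k
  proof (rule crossing_budget_carry[OF h ym])
    show "F \<le> y" using started_upto_unstarted_gt[OF S yU] by simp
    show "unstarted (insert y st) \<subseteq> unstarted st" unfolding unstarted_def by blast
    show "(y \<le> k) = (g \<le> k)" if "crosses k x y = 1"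
      using that xy yg unfolding crosses_def by (auto split: if_splits)
  qed (use st in simp_all)
  then show "budgeted_step s x st F y (insert y st) y (cycle_list y @ path)"
    unfolding budgeted_step_def using start ym card_unstarted_insert[OF yU] by simp
qed

lemma opt_run_move:
  assumes inv: "opt_inv s x st F path" and h: "snd s = Some g"
    and not_right: "\<not> (x = gmax \<pi> m x \<and> {y \<in> cycmins \<pi> m. y \<notin> st \<and> x < y} \<noteq> {})"
    and not_inside: "\<not> ({y \<in> cycmins \<pi> m. y \<notin> st \<and> y \<in> grp \<pi> m g} \<noteq> {} \<and>
        min x g < Min {y \<in> cycmins \<pi> m. y \<notin> st \<and> y \<in> grp \<pi> m g} \<and>
        Min {y \<in> cycmins \<pi> m. y \<notin> st \<and> y \<in> grp \<pi> m g} < max x g)"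
  shows "opt_run (Suc n) \<pi> m s x st = g # opt_run n \<pi> m (pns g s) g st"
    and "budgeted_step s x st F g st (max F g) (tl path)"
proof -
  show "opt_run (Suc n) \<pi> m s x st = g # opt_run n \<pi> m (pns g s) g st"
    unfolding opt_run_Suc_Some[OF h] if_not_P[OF not_right] if_not_P[OF not_inside] ..
  obtain rest where pr: "path = g # rest" and inv': "opt_inv (pns g s) g st (max F g) rest"
    and meas: "Suc (misplaced (pns g s)) = misplaced s"
    by (rule opt_inv_move[OF inv h not_right not_inside])
  have I: "cells_inv s st F path" using inv unfolding opt_inv_def by simp
  have gm: "g \<in> {1..m}" and st: "st \<noteq> {}" using cells_inv_path[OF I] pr by auto
  have "crosses k x g + crossing_budget k (pns g s) g st (max F g) \<le> crossing_budget k s x st F" for k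
    by (rule crossing_budget_carry[OF h gm _ _ st st]) auto
  then show "budgeted_step s x st F g st (max F g) (tl path)"
    unfolding budgeted_step_def using inv' pr gm meas by auto
qed

lemma opt_run_finishes:
  "opt_inv s x st F path \<Longrightarrow> misplaced s + card (unstarted st) < n \<Longrightarrow>
   finishes_within (opt_run n \<pi> m s x st) s x st F"
proof (induct n arbitrary: s x st F path)
  case (Suc n)
  note inv = Suc.prems(1)
  have step: "finishes_within (t # opt_run n \<pi> m (pns t s) t st') s x st F"
    if "budgeted_step s x st F t st' F' path'" for t st' F' path'
    using that Suc.hyps[of "pns t s" t st' F' path'] Suc.prems(2)
    by (intro finishes_within_Cons) (auto simp: budgeted_step_def)
  show ?case
  proof (cases "snd s")
    case None
    show ?thesis
    proof (cases "unstarted st = {}")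
      case True
      have "path = []" using inv None unfolding opt_inv_def chain_inv_def by (auto split: list.splits)
      moreover have "cells_inv s st F path" using inv unfolding opt_inv_def by simp
      ultimately have "s = goal m" using cells_inv_final[of s st F] None True by simp
      moreover have "crossings k x [] \<le> crossing_budget k s x st F" if "1 \<le> k" for k
        using inv None True that unfolding opt_inv_def crossing_budget_def by (auto simp: crosses_def)
      moreover have "opt_run (Suc n) \<pi> m s x st = []" using None True unfolding unstarted_def by simp
      ultimately show ?thesis unfolding finishes_within_def by simp
    next
      case False
      then show ?thesis using opt_run_start[OF inv None False] step by simp
    qed
  next
    case (Some g)
    consider (right) "x = gmax \<pi> m x \<and> {y \<in> cycmins \<pi> m. y \<notin> st \<and> x < y} \<noteq> {}"
      | (inside) "\<not> (x = gmax \<pi> m x \<and> {y \<in> cycmins \<pi> m. y \<notin> st \<and> x < y} \<noteq> {})"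
        "{y \<in> cycmins \<pi> m. y \<notin> st \<and> y \<in> grp \<pi> m g} \<noteq> {} \<and>
        min x g < Min {y \<in> cycmins \<pi> m. y \<notin> st \<and> y \<in> grp \<pi> m g} \<and>
        Min {y \<in> cycmins \<pi> m. y \<notin> st \<and> y \<in> grp \<pi> m g} < max x g"
      | (move) "\<not> (x = gmax \<pi> m x \<and> {y \<in> cycmins \<pi> m. y \<notin> st \<and> x < y} \<noteq> {})"
        "\<not> ({y \<in> cycmins \<pi> m. y \<notin> st \<and> y \<in> grp \<pi> m g} \<noteq> {} \<and>
        min x g < Min {y \<in> cycmins \<pi> m. y \<notin> st \<and> y \<in> grp \<pi> m g} \<and>
        Min {y \<in> cycmins \<pi> m. y \<notin> st \<and> y \<in> grp \<pi> m g} < max x g)"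
      by blast
    then show ?thesis
    proof cases
      case right then show ?thesis using opt_run_park_right[OF inv Some right] step by simp
    next
      case inside then show ?thesis using opt_run_park_inside[OF inv Some inside] step by simp
    next
      case move then show ?thesis using opt_run_move[OF inv Some move] step by simp
    qed
  qed
qed simp

end

section \<open>Optimality of OptPlanLOR\<close>

context lor
begin

lemma opt_plan_finishes: "finishes_within (opt_plan \<pi> m) (init \<pi> m) 1 {} 0"
proof -
  have "unstarted {} = cycmins \<pi> m" unfolding unstarted_def by simp
  then have "misplaced (init \<pi> m) + card (unstarted {}) < 4 * m + 4"
    using misplaced_init card_displaced_le card_cycmins_le by simp
  then show ?thesis unfolding opt_plan_def by (rule opt_run_finishes[OF opt_inv_init])
qed

lemma valid_opt_plan: "valid_plan m \<pi> (opt_plan \<pi> m)"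
  using opt_plan_finishes unfolding finishes_within_def valid_plan_def by simp

lemma length_opt_plan: "length (opt_plan \<pi> m) \<le> card displaced + card (cycmins \<pi> m)"
proof -
  have "unstarted {} = cycmins \<pi> m" unfolding unstarted_def by simp
  then show ?thesis using opt_plan_finishes misplaced_init unfolding finishes_within_def by simp
qed

lemma crossing_budget_init_le:
  assumes cm: "cycmins \<pi> m \<noteq> {}" and k: "1 \<le> k"
  shows "crossing_budget k (init \<pi> m) 1 {} 0 \<le> cut_lower_bound k"
proof -
  have first: "first_min \<in> displaced" using first_min_in[OF cm] cycmins_displaced by blast
  have "unstarted {} = cycmins \<pi> m" unfolding unstarted_def by simp
  then have B: "crossing_budget k (init \<pi> m) 1 {} 0 = 2 * cut_flow k +
      (if first_min \<le> k \<and> cut_flow k = 0 \<and> (\<exists>y\<in>cycmins \<pi> m. k < y) then 2 else 0) +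
      (if k < first_min then 2 else 0)"
    unfolding crossing_budget_def cut_potential_init by simp
  show ?thesis
  proof (cases "0 < cut_flow k")
    case True
    then obtain i where "i \<in> {1..m}" "i \<le> k" "k < \<pi> i"
      unfolding cut_flow_def by (metis (no_types, lifting) card.empty empty_Collect_eq less_irrefl)
    then have "first_min \<le> k" using first_min_le_displaced[of i] by fastforce
    then show ?thesis unfolding B cut_lower_bound_def using True by simp
  next
    case False
    then show ?thesis
      unfolding B cut_lower_bound_def using first cycmins_displaced by fastforce
  qed
qed

lemma path_len_opt_plan_le:
  assumes v: "valid_plan m \<pi> ps"
  shows "path_len (1 # opt_plan \<pi> m @ [1]) \<le> path_len (1 # ps @ [1])"
proof (cases "cycmins \<pi> m = {}")
  case True
  then have "displaced = {}" using cmin_in_cycmins by blast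
  then have "length (opt_plan \<pi> m) \<le> 0" using length_opt_plan True by (simp only: card.empty)
  then have "opt_plan \<pi> m = []" by simp
  then show ?thesis using path_len_nonneg[of "1 # ps @ [1]"] by (simp add: path_len_def)
next
  case False
  then have m: "1 \<le> m" using cycmins_displaced by fastforce
  have "crossings k 1 (opt_plan \<pi> m) \<le> crossings k 1 ps" if "k \<in> {1..<m}" for k
  proof -
    have k: "1 \<le> k" using that by simp
    have "crossings k 1 (opt_plan \<pi> m) \<le> crossing_budget k (init \<pi> m) 1 {} 0"
      using opt_plan_finishes k unfolding finishes_within_def by simp
    also have "\<dots> \<le> cut_lower_bound k" by (rule crossing_budget_init_le[OF False k])
    also have "\<dots> \<le> crossings k 1 ps" by (rule crossings_ge_cut_lower_bound[OF v k])
    finally show ?thesis .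
  qed
  then have "real (\<Sum>k\<in>{1..<m}. crossings k 1 (opt_plan \<pi> m)) \<le> real (\<Sum>k\<in>{1..<m}. crossings k 1 ps)"
    by (simp only: of_nat_le_iff) (rule sum_mono)
  then show ?thesis
    using path_len_eq_sum_crossings[of 1 m "opt_plan \<pi> m"] path_len_eq_sum_crossings[of 1 m ps]
      valid_opt_plan v m unfolding valid_plan_def by simp
qed

theorem opt_plan_optimal:
  assumes cp: "0 \<le> cp" and ct: "0 \<le> ct" and v: "valid_plan m \<pi> ps"
  shows "cost cp ct (opt_plan \<pi> m) \<le> cost cp ct ps"
proof -
  have "length (opt_plan \<pi> m) \<le> length ps"
    using length_opt_plan length_ge_displaced_plus_cycles[OF v] by simp
  then show ?thesis
    unfolding cost_def using path_len_opt_plan_le[OF v] cp ct by (intro add_mono mult_right_mono) auto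
qed

lemma opt_cost_eq_cost_opt_plan:
  assumes "0 \<le> cp" and "0 \<le> ct"
  shows "opt_cost cp ct m \<pi> = cost cp ct (opt_plan \<pi> m)"
  unfolding opt_cost_def
  by (rule cInf_eq_minimum) (use valid_opt_plan opt_plan_optimal[OF assms] in auto)

end

section \<open>SweepCyclesLOR\<close>

lemma sw_follow_linked:
  "linked (fst s) p None \<Longrightarrow> distinct p \<Longrightarrow> p \<noteq> [] \<Longrightarrow> snd s = Some (hd p) \<Longrightarrow> last p = y \<Longrightarrow>
   length p \<le> n \<Longrightarrow>
   sw_follow n y s = p \<and> run p s = ((\<lambda>z. if z \<in> set p then Some z else fst s z), None)"
proof (induct p arbitrary: s n)
  case Nil then show ?case by simp
next
  case (Cons a p)
  obtain n' where n: "n = Suc n'" using Cons.prems(6) by (cases n) auto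
  show ?case
  proof (cases p)
    case Nil
    have ay: "a = y" using Cons.prems(5) Nil by simp
    have ca: "fst s a = None" using Cons.prems(1) Nil by simp
    have "sw_follow n y s = [a]" using n Cons.prems(4) ay by simp
    moreover have "run [a] s = ((\<lambda>z. if z \<in> set [a] then Some z else fst s z), None)"
      using ca Cons.prems(4) by (auto simp: pns_alt)
    ultimately show ?thesis using Nil by simp
  next
    case (Cons b rest)
    note pb = Cons
    have ay: "a \<noteq> y" using Cons.prems(2,5) pb by (metis distinct.simps(2) last.simps last_in_set list.distinct(1))
    have cab: "fst s a = Some b" using Cons.prems(1) pb by simp
    define s' where "s' = pns a s"
    have s'e: "s' = ((fst s)(a := Some a), Some b)" unfolding s'_def pns_alt using cab Cons.prems(4) by simp
    have anp: "a \<notin> set p" using Cons.prems(2) by simp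
    have l': "linked (fst s') p None" using linked_tl[OF Cons.prems(1)] linked_upd[OF anp] s'e by simp
    have IH: "sw_follow n' y s' = p \<and> run p s' = ((\<lambda>z. if z \<in> set p then Some z else fst s' z), None)"
      using Cons.hyps[OF l'] Cons.prems(2,3,5,6) pb s'e n by simp
    have "sw_follow n y s = a # sw_follow n' y s'" using n Cons.prems(4) ay unfolding s'_def by simp
    moreover have "run (a # p) s = run p s'" unfolding s'_def by simp
    moreover have "(\<lambda>z. if z \<in> set p then Some z else fst s' z) = (\<lambda>z. if z \<in> set (a # p) then Some z else fst s z)"
      using s'e by auto
    ultimately show ?thesis using IH by simp
  qed
qed

context lor
begin

lemma crossings_open_follow:
  "linked (fst s) p None \<Longrightarrow> distinct p \<Longrightarrow> p \<noteq> [] \<Longrightarrow> snd s = Some (hd p) \<Longrightarrow> set p \<subseteq> {1..m} \<Longrightarrow>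
   crossings_open k x p + cut_potential m k (run p s) (last p) \<le> cut_potential m k s x"
proof (induct p arbitrary: s x)
  case Nil then show ?case by simp
next
  case (Cons a p)
  have am: "a \<in> {1..m}" using Cons.prems(5) by simp
  have c1: "crosses k x a + cut_potential m k s a \<le> cut_potential m k s x"
    by (rule cut_potential_carry[OF Cons.prems(4)]) simp
  have pp: "cut_potential m k (pns a s) a = cut_potential m k s a" by (rule cut_potential_pns[OF am])
  show ?case
  proof (cases p)
    case Nil
    then show ?thesis using c1 pp by simp
  next
    case (Cons b rest)
    note pb = Cons
    have cab: "fst s a = Some b" using Cons.prems(1) pb by simp
    define s' where "s' = pns a s"
    have s'e: "s' = ((fst s)(a := Some a), Some b)" unfolding s'_def pns_alt using cab Cons.prems(4) by simp
    have anp: "a \<notin> set p" using Cons.prems(2) by simp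
    have l': "linked (fst s') p None" using linked_tl[OF Cons.prems(1)] linked_upd[OF anp] s'e by simp
    have IH: "crossings_open k a p + cut_potential m k (run p s') (last p) \<le> cut_potential m k s' a"
      using Cons.hyps[OF l'] Cons.prems(2,5) pb s'e by simp
    have "crossings_open k x (a # p) = crosses k x a + crossings_open k a p" by simp
    moreover have "run (a # p) s = run p s'" unfolding s'_def by simp
    moreover have "last (a # p) = last p" using pb by simp
    ultimately show ?thesis using IH c1 pp unfolding s'_def by simp
  qed
qed


text \<open>The configuration after SweepCyclesLOR has closed the cycles with minima in \<open>P\<close>.\<close>
definition sweep_state :: "nat set \<Rightarrow> lstate" where
  "sweep_state P = ((\<lambda>j. if j \<in> {1..m}
     then Some (if \<pi> j \<noteq> j \<and> cmin \<pi> j \<notin> P then \<pi> j else j) else None), None)"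

lemma sweep_state_empty: "sweep_state {} = init \<pi> m"
  unfolding sweep_state_def init_def by (auto intro!: ext)

lemma sweep_state_goal:
  assumes "cycmins \<pi> m \<subseteq> P" shows "sweep_state P = goal m"
proof -
  have "fst (sweep_state P) j = fst (goal m) j" for j
  proof (cases "j \<in> displaced")
    case True
    then have "cmin \<pi> j \<in> P" using cmin_in_cycmins assms by blast
    then show ?thesis using True unfolding sweep_state_def goal_def by simp
  qed (auto simp: sweep_state_def goal_def)
  then have "fst (sweep_state P) = fst (goal m)" by (rule ext)
  then show ?thesis by (simp add: sweep_state_def goal_def)
qed

lemma sw_loop_next_cycle:
  assumes yP: "y \<in> cycmins \<pi> m - P" and ymin: "\<forall>z\<in>cycmins \<pi> m - P. y \<le> z"
  shows "sw_loop (Suc n) m (sweep_state P) = y # cycle_list y @ sw_loop n m (sweep_state (insert y P))"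
    and "run (cycle_list y) (pns y (sweep_state P)) = sweep_state (insert y P)"
    and "crossings_open k y (cycle_list y) + cut_potential m k (sweep_state (insert y P)) y
           \<le> cut_potential m k (sweep_state P) y"
proof -
  define c where "c = fst (sweep_state P)"
  define s1 where "s1 = pns y (sweep_state P)"
  define B where "B = {i \<in> {1..m}. fst (sweep_state P) i \<noteq> Some i}"
  have ycm: "y \<in> cycmins \<pi> m" and yD: "y \<in> displaced" and cy: "cmin \<pi> y = y"
    using yP cycmins_displaced cycmins_cmin by auto
  have ym: "y \<in> {1..m}" using yD by simp
  have Beq: "B = {j\<in>displaced. cmin \<pi> j \<notin> P}" unfolding B_def sweep_state_def by auto
  have yB: "y \<in> B" unfolding Beq using yD cy yP by simp
  have MB: "Min B = y"
  proof (rule antisym)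
    show "Min B \<le> y" using yB unfolding B_def by simp
    have "finite B" unfolding B_def by simp
    then have "Min B \<in> B" using yB Min_in by blast
    then have "cmin \<pi> (Min B) \<in> cycmins \<pi> m - P" unfolding Beq using cmin_in_cycmins by simp
    then have "y \<le> cmin \<pi> (Min B)" using ymin by blast
    then show "y \<le> Min B" using cmin_self[of "Min B"] by linarith
  qed
  have cellsP: "c i = Some (\<pi> i)" if "i \<in> orb \<pi> y" for i
  proof -
    have iD: "i \<in> displaced" using orb_displaced[OF yD] that by blast
    then have "cmin \<pi> i = y" using in_orb_iff_cmin[OF ycm iD] that by simp
    then show ?thesis unfolding c_def sweep_state_def using iD yP by simp
  qed
  have s1e: "s1 = (c(y := None), Some (\<pi> y))"
    using cellsP[OF self_in_orb] unfolding s1_def pns_alt c_def by (simp add: sweep_state_def)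
  have linked1: "linked (fst s1) (cycle_list y) None"
    unfolding s1e fst_conv by (rule linked_cycle_list) (simp_all add: cellsP)
  have "length (cycle_list y) \<le> Suc m"
    using card_mono[OF _ orb_subset[OF ym]] length_cycle_list[of y] by simp
  moreover have hd1: "snd s1 = Some (hd (cycle_list y))" using s1e hd_cycle_list by simp
  ultimately have F: "sw_follow (Suc m) y s1 = cycle_list y \<and>
      run (cycle_list y) s1 = ((\<lambda>z. if z \<in> set (cycle_list y) then Some z else fst s1 z), None)"
    using sw_follow_linked[OF linked1 distinct_cycle_list cycle_list_ne _ last_cycle_list] by blast
  have "(\<lambda>z. if z \<in> set (cycle_list y) then Some z else fst s1 z) = fst (sweep_state (insert y P))"
  proof
    fix z
    show "(if z \<in> set (cycle_list y) then Some z else fst s1 z) = fst (sweep_state (insert y P)) z"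
    proof (cases "z \<in> orb \<pi> y")
      case True
      then have "z \<in> displaced" "cmin \<pi> z = y"
        using orb_displaced[OF yD] in_orb_iff_cmin[OF ycm] by auto
      then show ?thesis using True unfolding set_cycle_list sweep_state_def by simp
    next
      case False
      then have "z \<noteq> y" "z \<in> displaced \<Longrightarrow> cmin \<pi> z \<noteq> y" using in_orb_iff_cmin[OF ycm] by auto
      then show ?thesis using False unfolding set_cycle_list s1e c_def sweep_state_def by auto
    qed
  qed
  then show runc: "run (cycle_list y) (pns y (sweep_state P)) = sweep_state (insert y P)"
    using F unfolding s1_def by (simp add: sweep_state_def)
  have "B \<noteq> {}" using yB by blast
  then show "sw_loop (Suc n) m (sweep_state P) = y # cycle_list y @ sw_loop n m (sweep_state (insert y P))"
    using MB F runc unfolding B_def s1_def by (simp add: Let_def)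
  have "set (cycle_list y) \<subseteq> {1..m}" using set_cycle_list orb_subset[OF ym] by simp
  from crossings_open_follow[OF linked1 distinct_cycle_list cycle_list_ne hd1 this, of k y]
  show "crossings_open k y (cycle_list y) + cut_potential m k (sweep_state (insert y P)) y
           \<le> cut_potential m k (sweep_state P) y"
    using runc last_cycle_list[of y] cut_potential_pns[OF ym, of k "sweep_state P"]
    unfolding s1_def by simp
qed

lemma card_unswept_insert:
  assumes "y \<in> cycmins \<pi> m - P"
  shows "card {j\<in>displaced. cmin \<pi> j \<notin> P} = card (orb \<pi> y) + card {j\<in>displaced. cmin \<pi> j \<notin> insert y P}"
proof -
  have ycm: "y \<in> cycmins \<pi> m" using assms by simp
  have "{j\<in>displaced. cmin \<pi> j \<notin> P} = orb \<pi> y \<union> {j\<in>displaced. cmin \<pi> j \<notin> insert y P}"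
    using assms orb_displaced[OF cycmins_displaced[OF ycm]] in_orb_iff_cmin[OF ycm] by auto
  moreover have "orb \<pi> y \<inter> {j\<in>displaced. cmin \<pi> j \<notin> insert y P} = {}"
    using in_orb_iff_cmin[OF ycm] by auto
  ultimately show ?thesis by (simp add: card_Un_disjoint)
qed

lemma crossings_sweep_step:
  assumes xy: "x \<le> y" and yP: "y \<in> cycmins \<pi> m - P"
    and rest: "C \<le> cut_potential m k (sweep_state (insert y P)) y + (if k < y then 1 else 0) +
      (if y \<le> k \<and> (\<exists>z\<in>cycmins \<pi> m - insert y P. k < z) then 2 else 0)"
    and cycle: "B + cut_potential m k (sweep_state (insert y P)) y \<le> cut_potential m k (sweep_state P) y"
  shows "crosses k x y + B + C \<le> cut_potential m k (sweep_state P) x +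
      (if k < x then 1 else 0) + (if x \<le> k \<and> (\<exists>z\<in>cycmins \<pi> m - P. k < z) then 2 else 0)"
proof -
  let ?later = "\<lambda>Q. \<exists>z\<in>cycmins \<pi> m - Q. k < z"
  have hand: "cut_potential m k (sweep_state P) y = cut_potential m k (sweep_state P) x"
    using cut_potential_move_hand[of m k "sweep_state P" y x] unfolding sweep_state_def wrong_side_def by simp
  consider "k < x" | "x \<le> k" "k < y" | "y \<le> k" by linarith
  then show ?thesis
  proof cases
    case 1
    then have "crosses k x y = 0" "k < y" using xy by (auto simp: crosses_def)
    then show ?thesis using 1 hand rest cycle by simp
  next
    case 2
    then have "crosses k x y = 1" "?later P" using yP by (auto simp: crosses_def)
    then show ?thesis using 2 hand rest cycle by simp
  next
    case 3
    then have "crosses k x y = 0" "(if k < x then 1 else 0) = (0::nat)" using xy by (auto simp: crosses_def)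
    moreover have "(if y \<le> k \<and> ?later (insert y P) then 2 else 0) \<le> (if x \<le> k \<and> ?later P then 2 else (0::nat))"
      using 3 xy by auto
    moreover have "C \<le> cut_potential m k (sweep_state (insert y P)) y + (if y \<le> k \<and> ?later (insert y P) then 2 else 0)"
      using rest 3 by simp
    ultimately show ?thesis using hand cycle by linarith
  qed
qed

text \<open>The tour of SweepCyclesLOR from position \<open>x\<close> crosses cut \<open>k\<close> at most as often as
  the potential requires, plus once for each cut left of \<open>x\<close> (on the way back to cell \<open>1\<close>)
  and twice for each cut it has to pass to reach the remaining cycles.\<close>
lemma sw_loop_finishes:
  "P \<subseteq> cycmins \<pi> m \<Longrightarrow> card (cycmins \<pi> m - P) < n \<Longrightarrow> x \<in> {1..m} \<Longrightarrow>
   \<forall>y\<in>cycmins \<pi> m - P. x \<le> y \<Longrightarrow>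
   set (sw_loop n m (sweep_state P)) \<subseteq> {1..m} \<and> run (sw_loop n m (sweep_state P)) (sweep_state P) = goal m \<and>
   length (sw_loop n m (sweep_state P)) \<le> card {j\<in>displaced. cmin \<pi> j \<notin> P} + card (cycmins \<pi> m - P) \<and>
   (\<forall>k\<ge>1. crossings k x (sw_loop n m (sweep_state P)) \<le> cut_potential m k (sweep_state P) x +
      (if k < x then 1 else 0) + (if x \<le> k \<and> (\<exists>y\<in>cycmins \<pi> m - P. k < y) then 2 else 0))"
proof (induct n arbitrary: P x)
  case (Suc n)
  show ?case
  proof (cases "cycmins \<pi> m - P = {}")
    case True
    then have "{i \<in> {1..m}. fst (sweep_state P) i \<noteq> Some i} = {}"
      using cmin_in_cycmins unfolding sweep_state_def by auto
    then have e: "sw_loop (Suc n) m (sweep_state P) = []" by (simp add: Let_def)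
    have "sweep_state P = goal m" using True by (intro sweep_state_goal) blast
    moreover have "crossings k x [] \<le> (if k < x then 1 else 0)" if "1 \<le> k" for k
      using that Suc.prems(3) by (auto simp: crosses_def)
    ultimately show ?thesis unfolding e by fastforce
  next
    case False
    define y where "y = Min (cycmins \<pi> m - P)"
    have yP: "y \<in> cycmins \<pi> m - P" unfolding y_def using False by (intro Min_in) auto
    have ymin: "\<forall>z\<in>cycmins \<pi> m - P. y \<le> z" unfolding y_def by simp
    have ym: "y \<in> {1..m}" and xy: "x \<le> y" using yP cycmins_displaced Suc.prems(4) by auto
    note next_cycle = sw_loop_next_cycle[OF yP ymin]
    have rest: "cycmins \<pi> m - insert y P = (cycmins \<pi> m - P) - {y}" by auto
    have IH: "set (sw_loop n m (sweep_state (insert y P))) \<subseteq> {1..m} \<and>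
      run (sw_loop n m (sweep_state (insert y P))) (sweep_state (insert y P)) = goal m \<and>
      length (sw_loop n m (sweep_state (insert y P)))
        \<le> card {j\<in>displaced. cmin \<pi> j \<notin> insert y P} + card (cycmins \<pi> m - insert y P) \<and>
      (\<forall>k\<ge>1. crossings k y (sw_loop n m (sweep_state (insert y P)))
        \<le> cut_potential m k (sweep_state (insert y P)) y + (if k < y then 1 else 0) +
          (if y \<le> k \<and> (\<exists>z\<in>cycmins \<pi> m - insert y P. k < z) then 2 else 0))"
    proof (rule Suc.hyps)
      show "card (cycmins \<pi> m - insert y P) < n"
        using Suc.prems(2) card_Diff1_less[OF _ yP] unfolding rest by simp
    qed (use Suc.prems(1) yP ym ymin rest in auto)
    have card_rest: "card (cycmins \<pi> m - P) = Suc (card (cycmins \<pi> m - insert y P))"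
      unfolding rest using card_Suc_Diff1[OF _ yP] by simp
    have "crossings k x (sw_loop (Suc n) m (sweep_state P)) \<le> cut_potential m k (sweep_state P) x +
      (if k < x then 1 else 0) + (if x \<le> k \<and> (\<exists>y\<in>cycmins \<pi> m - P. k < y) then 2 else 0)"
      if k: "1 \<le> k" for k
    proof -
      have "crossings k y (sw_loop n m (sweep_state (insert y P)))
          \<le> cut_potential m k (sweep_state (insert y P)) y + (if k < y then 1 else 0) +
            (if y \<le> k \<and> (\<exists>z\<in>cycmins \<pi> m - insert y P. k < z) then 2 else 0)"
        using IH k by blast
      moreover have "crossings k x (sw_loop (Suc n) m (sweep_state P)) = crosses k x y +
          crossings_open k y (cycle_list y) + crossings k y (sw_loop n m (sweep_state (insert y P)))"
        unfolding next_cycle(1) using last_cycle_list[of y] cycle_list_ne[of y] by (simp add: crossings_append)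
      ultimately show ?thesis using crossings_sweep_step[OF xy yP _ next_cycle(3)] by presburger
    qed
    moreover have "set (cycle_list y) \<subseteq> {1..m}" using set_cycle_list orb_subset[OF ym] by simp
    ultimately show ?thesis
      unfolding next_cycle(1) using IH ym next_cycle(2) card_unswept_insert[OF yP] card_rest length_cycle_list[of y]
      by (simp add: run_append)
  qed
qed simp

end

context lor
begin

lemma sweep_plan_bounds:
  assumes m1: "1 \<le> m"
  shows "valid_plan m \<pi> (sweep_plan \<pi> m)"
    and "length (sweep_plan \<pi> m) \<le> card displaced + card (cycmins \<pi> m)"
    and "1 \<le> k \<Longrightarrow> crossings k 1 (sweep_plan \<pi> m) \<le> 2 * cut_flow k + 2"
proof -
  have sp: "sweep_plan \<pi> m = sw_loop (Suc m) m (sweep_state {})"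
    unfolding sweep_plan_def sweep_state_empty ..
  have "\<forall>y\<in>cycmins \<pi> m - {}. 1 \<le> y" using cycmins_displaced by auto
  moreover have "card (cycmins \<pi> m - {}) < Suc m" using card_cycmins_le by simp
  ultimately have A: "set (sweep_plan \<pi> m) \<subseteq> {1..m} \<and> run (sweep_plan \<pi> m) (init \<pi> m) = goal m \<and>
      length (sweep_plan \<pi> m) \<le> card {j\<in>displaced. cmin \<pi> j \<notin> {}} + card (cycmins \<pi> m - {}) \<and>
      (\<forall>k\<ge>1. crossings k 1 (sweep_plan \<pi> m) \<le> cut_potential m k (init \<pi> m) 1 +
        (if k < 1 then 1 else 0) + (if 1 \<le> k \<and> (\<exists>y\<in>cycmins \<pi> m - {}. k < y) then 2 else 0))"
    using sw_loop_finishes[of "{}" "Suc m" 1] m1 unfolding sp sweep_state_empty by simp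
  then show "valid_plan m \<pi> (sweep_plan \<pi> m)"
    and "length (sweep_plan \<pi> m) \<le> card displaced + card (cycmins \<pi> m)"
    unfolding valid_plan_def by simp_all
  show "crossings k 1 (sweep_plan \<pi> m) \<le> 2 * cut_flow k + 2" if "1 \<le> k"
  proof -
    have "crossings k 1 (sweep_plan \<pi> m) \<le> cut_potential m k (init \<pi> m) 1 +
        (if k < 1 then 1 else 0) + (if 1 \<le> k \<and> (\<exists>y\<in>cycmins \<pi> m - {}. k < y) then 2 else 0)"
      using A that by blast
    then show ?thesis using that unfolding cut_potential_init by (simp split: if_splits)
  qed
qed

lemma sweep_plan_0: "m = 0 \<Longrightarrow> sweep_plan \<pi> m = []"
  unfolding sweep_plan_def init_def by (simp add: Let_def)

lemma sweep_cost_le: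
  assumes cp: "0 \<le> cp" and ct: "0 \<le> ct"
  shows "cost cp ct (sweep_plan \<pi> m) \<le> 2 * real m * cp + ct * (displacement + 2 * real m)"
proof (cases "m = 0")
  case True
  moreover have "0 \<le> displacement" unfolding displacement_def by (rule sum_nonneg) simp
  ultimately show ?thesis using ct sweep_plan_0 by (simp add: cost_def path_len_def)
next
  case False
  then have m1: "1 \<le> m" by simp
  note S = sweep_plan_bounds[OF m1]
  have l: "real (length (sweep_plan \<pi> m)) \<le> 2 * real m"
    using S(2) card_displaced_le card_cycmins_le by linarith
  have "(\<Sum>k\<in>{1..<m}. crossings k 1 (sweep_plan \<pi> m)) \<le> (\<Sum>k\<in>{1..<m}. 2 * cut_flow k + 2)"
    by (rule sum_mono) (use S(3) in simp)
  also have "\<dots> = (\<Sum>k\<in>{1..<m}. 2 * cut_flow k) + (\<Sum>k\<in>{1..<m}. 2)" by (rule sum.distrib)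
  also have "(\<Sum>k\<in>{1..<m}. (2::nat)) = 2 * (m - 1)" by simp
  finally have "real (\<Sum>k\<in>{1..<m}. crossings k 1 (sweep_plan \<pi> m))
      \<le> real ((\<Sum>k\<in>{1..<m}. 2 * cut_flow k) + 2 * (m - 1))"
    by (simp only: of_nat_le_iff)
  then have pl: "path_len (1 # sweep_plan \<pi> m @ [1]) \<le> displacement + 2 * real m"
    using path_len_eq_sum_crossings[of 1 m "sweep_plan \<pi> m"] S(1) m1 displacement_eq_sum_cut_flow
    unfolding valid_plan_def by (simp add: of_nat_diff)
  have "cost cp ct (sweep_plan \<pi> m)
      = real (length (sweep_plan \<pi> m)) * cp + path_len (1 # sweep_plan \<pi> m @ [1]) * ct"
    unfolding cost_def ..
  also have "\<dots> \<le> (2 * real m) * cp + (displacement + 2 * real m) * ct"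
    by (intro add_mono mult_right_mono l pl cp ct)
  finally show ?thesis by (simp add: mult.commute)
qed

lemma opt_cost_le_sweep_cost:
  assumes "0 \<le> cp" and "0 \<le> ct"
  shows "opt_cost cp ct m \<pi> \<le> cost cp ct (sweep_plan \<pi> m)"
proof (cases "m = 0")
  case True
  then have "valid_plan m \<pi> (sweep_plan \<pi> m)"
    using sweep_plan_0 unfolding valid_plan_def init_def goal_def by auto
  then show ?thesis unfolding opt_cost_eq_cost_opt_plan[OF assms] by (rule opt_plan_optimal[OF assms])
next
  case False
  then show ?thesis unfolding opt_cost_eq_cost_opt_plan[OF assms]
    using opt_plan_optimal[OF assms sweep_plan_bounds(1)] by simp
qed

lemma opt_cost_ge_displacement:
  assumes "0 \<le> cp" and "0 \<le> ct"
  shows "ct * displacement \<le> opt_cost cp ct m \<pi>"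
  unfolding opt_cost_eq_cost_opt_plan[OF assms] by (rule cost_ge_displacement[OF assms valid_opt_plan])

end

section \<open>Averages over all permutations\<close>

lemma lor_perms: "p \<in> perms m \<Longrightarrow> lor p m"
  unfolding perms_def lor_def by simp

lemma finite_perms: "finite (perms m)"
  unfolding perms_def by (rule finite_permutations) simp

lemma card_perms: "card (perms m) = fact m"
  unfolding perms_def by (rule card_permutations) simp_all

definition perms_at :: "nat \<Rightarrow> nat \<Rightarrow> nat \<Rightarrow> (nat \<Rightarrow> nat) set" where
  "perms_at m i j = {p \<in> perms m. p i = j}"

lemma card_perms_at_eq:
  assumes j: "j \<in> {1..m}" and j': "j' \<in> {1..m}" and i: "i \<in> {1..m}"
  shows "card (perms_at m i j) = card (perms_at m i j')"
proof (rule bij_betw_same_card)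
  let ?f = "\<lambda>p. Transposition.transpose j j' \<circ> p"
  show "bij_betw ?f (perms_at m i j) (perms_at m i j')"
  proof (rule bij_betw_byWitness[where f'="?f"])
    show "\<forall>a\<in>perms_at m i j. ?f (?f a) = a" by (simp add: fun_eq_iff)
    show "\<forall>a\<in>perms_at m i j'. ?f (?f a) = a" by (simp add: fun_eq_iff)
    show "?f ` perms_at m i j \<subseteq> perms_at m i j'"
    proof
      fix q assume "q \<in> ?f ` perms_at m i j"
      then obtain p where p: "p \<in> perms_at m i j" "q = ?f p" by blast
      have pp: "p permutes {1..m}" "p i = j" using p(1) unfolding perms_at_def perms_def by auto
      have "q permutes {1..m}" using permutes_compose[OF pp(1) permutes_swap_id[OF j j']] p(2) by simp
      moreover have "q i = j'" using p(2) pp(2) by simp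
      ultimately show "q \<in> perms_at m i j'" unfolding perms_at_def perms_def by simp
    qed
    show "?f ` perms_at m i j' \<subseteq> perms_at m i j"
    proof
      fix q assume "q \<in> ?f ` perms_at m i j'"
      then obtain p where p: "p \<in> perms_at m i j'" "q = ?f p" by blast
      have pp: "p permutes {1..m}" "p i = j'" using p(1) unfolding perms_at_def perms_def by auto
      have "q permutes {1..m}" using permutes_compose[OF pp(1) permutes_swap_id[OF j j']] p(2) by simp
      moreover have "q i = j" using p(2) pp(2) by simp
      ultimately show "q \<in> perms_at m i j" unfolding perms_at_def perms_def by simp
    qed
  qed
qed

lemma perms_UN_perms_at: assumes i: "i \<in> {1..m}" shows "perms m = (\<Union>j\<in>{1..m}. perms_at m i j)"
  unfolding perms_at_def perms_def using i permutes_in_image by fastforce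

lemma card_perms_at:
  assumes i: "i \<in> {1..m}" and j: "j \<in> {1..m}"
  shows "card (perms_at m i j) = fact (m - 1)"
proof -
  have fin: "\<forall>j'\<in>{1..m}. finite (perms_at m i j')" unfolding perms_at_def using finite_perms by simp
  have dis: "\<forall>a\<in>{1..m}. \<forall>b\<in>{1..m}. a \<noteq> b \<longrightarrow> perms_at m i a \<inter> perms_at m i b = {}"
    unfolding perms_at_def by blast
  have "fact m = card (perms m)" by (simp add: card_perms)
  also have "\<dots> = (\<Sum>j'\<in>{1..m}. card (perms_at m i j'))"
    unfolding perms_UN_perms_at[OF i] by (rule card_UN_disjoint[OF finite_atLeastAtMost fin dis])
  also have "\<dots> = (\<Sum>j'\<in>{1..m}. card (perms_at m i j))"
  proof (rule sum.cong[OF refl])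
    fix j' assume "j' \<in> {1..m}"
    then show "card (perms_at m i j') = card (perms_at m i j)" by (rule card_perms_at_eq[OF _ j i])
  qed
  also have "\<dots> = m * card (perms_at m i j)" by simp
  finally have e: "fact m = m * card (perms_at m i j)" .
  have m1: "0 < m" using i by simp
  have "fact m = m * fact (m - 1)" using fact_reduce[of m, where 'a=nat] m1 by simp
  then show ?thesis using e m1 by simp
qed

lemma sum_perms_apply:
  fixes f :: "nat \<Rightarrow> real"
  assumes i: "i \<in> {1..m}"
  shows "(\<Sum>p\<in>perms m. f (p i)) = fact (m - 1) * (\<Sum>j\<in>{1..m}. f j)"
proof -
  have fin: "finite {p \<in> perms m. p i = j'}" for j' using finite_perms by simp
  have "(\<Sum>p\<in>perms m. f (p i)) = (\<Sum>j\<in>{1..m}. \<Sum>p\<in>perms_at m i j. f (p i))"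
    unfolding perms_UN_perms_at[OF i] by (rule sum.UNION_disjoint) (auto simp: fin perms_at_def)
  also have "\<dots> = (\<Sum>j\<in>{1..m}. real (card (perms_at m i j)) * f j)"
    by (rule sum.cong) (auto simp: perms_at_def)
  also have "\<dots> = (\<Sum>j\<in>{1..m}. fact (m - 1) * f j)"
    by (rule sum.cong) (use card_perms_at[OF i] in auto)
  finally show ?thesis by (simp add: sum_distrib_left)
qed

lemma sum_abs_diff_Suc: "(\<Sum>j\<in>{1..m}. \<bar>real (Suc m) - real j\<bar>) = real m * (real m + 1) / 2"
proof -
  have "(\<Sum>j\<in>{1..m}. \<bar>real (Suc m) - real j\<bar>) = real m * real (Suc m) - (\<Sum>j\<in>{1..m}. real j)"
    by (simp add: sum_subtractf)
  moreover have "2 * (\<Sum>j\<in>{1..m}. real j) = real m * (real m + 1)"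
    using double_gauss_sum_from_Suc_0[of m] by simp
  ultimately show ?thesis by (simp add: field_simps)
qed

lemma sum_sum_abs_diff:
  "(\<Sum>i\<in>{1..m}. \<Sum>j\<in>{1..m}. \<bar>real i - real j\<bar>) = real m * (real m * real m - 1) / 3"
proof (induct m)
  case (Suc m)
  let ?A = "{1..m}" and ?a = "Suc m"
  have ins: "{1..Suc m} = insert ?a ?A" by auto
  have G2: "(\<Sum>j\<in>?A. \<bar>real j - real ?a\<bar>) = real m * (real m + 1) / 2"
    using sum_abs_diff_Suc[of m] by (simp add: abs_minus_commute)
  have "(\<Sum>i\<in>{1..Suc m}. \<Sum>j\<in>{1..Suc m}. \<bar>real i - real j\<bar>) =
      (\<Sum>j\<in>?A. \<bar>real ?a - real j\<bar>) + (\<Sum>i\<in>?A. \<bar>real i - real ?a\<bar>) +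
      (\<Sum>i\<in>?A. \<Sum>j\<in>?A. \<bar>real i - real j\<bar>)"
    unfolding ins by (simp add: sum.distrib)
  also have "\<dots> = real m * (real m + 1) + real m * (real m * real m - 1) / 3"
    using sum_abs_diff_Suc[of m] G2 Suc by simp
  finally show ?case by (simp add: field_simps)
qed simp

lemma mean_displacement:
  assumes "1 \<le> m"
  shows "(\<Sum>p\<in>perms m. lor.displacement p m) / real (card (perms m)) = (real m * real m - 1) / 3"
proof -
  have "(\<Sum>p\<in>perms m. lor.displacement p m) = (\<Sum>p\<in>perms m. \<Sum>i\<in>{1..m}. \<bar>real i - real (p i)\<bar>)"
    by (simp add: lor.displacement_def[OF lor_perms])
  also have "\<dots> = (\<Sum>i\<in>{1..m}. \<Sum>p\<in>perms m. \<bar>real i - real (p i)\<bar>)" by (rule sum.swap)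
  also have "\<dots> = (\<Sum>i\<in>{1..m}. fact (m - 1) * (\<Sum>j\<in>{1..m}. \<bar>real i - real j\<bar>))"
    by (rule sum.cong[OF refl]) (rule sum_perms_apply[where f="\<lambda>j. \<bar>real _ - real j\<bar>"])
  also have "\<dots> = fact (m - 1) * (\<Sum>i\<in>{1..m}. \<Sum>j\<in>{1..m}. \<bar>real i - real j\<bar>)"
    by (simp add: sum_distrib_left)
  also have "\<dots> = fact (m - 1) * (real m * (real m * real m - 1) / 3)"
    unfolding sum_sum_abs_diff ..
  finally show ?thesis
    using assms fact_reduce[of m, where 'a=real] by (simp add: card_perms field_simps)
qed

lemma average_mono:
  fixes f g :: "(nat \<Rightarrow> nat) \<Rightarrow> real"
  shows "(\<And>p. p \<in> perms m \<Longrightarrow> f p \<le> g p) \<Longrightarrow>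
    (\<Sum>p\<in>perms m. f p) / real (card (perms m)) \<le> (\<Sum>p\<in>perms m. g p) / real (card (perms m))"
  by (intro divide_right_mono sum_mono) auto

lemma exp_opt_cost_ge:
  assumes "0 \<le> cp" and "0 \<le> ct" and "1 \<le> m"
  shows "ct * ((real m * real m - 1) / 3) \<le> exp_opt_cost cp ct m"
proof -
  have "(\<Sum>p\<in>perms m. ct * lor.displacement p m) / real (card (perms m)) \<le> exp_opt_cost cp ct m"
    unfolding exp_opt_cost_def
    by (rule average_mono) (rule lor.opt_cost_ge_displacement[OF lor_perms assms(1,2)])
  moreover have "(\<Sum>p\<in>perms m. ct * lor.displacement p m) / real (card (perms m))
      = ct * ((\<Sum>p\<in>perms m. lor.displacement p m) / real (card (perms m)))"
    by (simp add: sum_distrib_left)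
  ultimately show ?thesis unfolding mean_displacement[OF assms(3)] by simp
qed

lemma exp_opt_cost_le_exp_sweep_cost:
  assumes "0 \<le> cp" and "0 \<le> ct"
  shows "exp_opt_cost cp ct m \<le> exp_sweep_cost cp ct m"
  unfolding exp_opt_cost_def exp_sweep_cost_def
  by (rule average_mono) (rule lor.opt_cost_le_sweep_cost[OF lor_perms assms])

lemma exp_sweep_cost_le:
  assumes "0 \<le> cp" and "0 \<le> ct" and "1 \<le> m"
  shows "exp_sweep_cost cp ct m \<le> 2 * real m * cp + ct * ((real m * real m - 1) / 3 + 2 * real m)"
proof -
  let ?c = "2 * real m * cp + ct * 2 * real m"
  have "exp_sweep_cost cp ct m \<le> (\<Sum>p\<in>perms m. ?c + ct * lor.displacement p m) / real (card (perms m))"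
    unfolding exp_sweep_cost_def
    by (rule average_mono) (use lor.sweep_cost_le[OF lor_perms assms(1,2)] in \<open>simp add: algebra_simps\<close>)
  also have "\<dots> = ?c + ct * ((\<Sum>p\<in>perms m. lor.displacement p m) / real (card (perms m)))"
    using card_perms[of m] by (simp add: sum.distrib sum_distrib_left[symmetric] add_divide_distrib)
  finally show ?thesis unfolding mean_displacement[OF assms(3)] by (simp add: algebra_simps)
qed

lemma ratio_bounds:
  fixes cp ct :: real
  assumes cp: "0 < cp" and ct: "0 < ct" and m2: "2 \<le> m"
  shows "1 \<le> exp_sweep_cost cp ct m / exp_opt_cost cp ct m"
    and "exp_sweep_cost cp ct m / exp_opt_cost cp ct m \<le> 1 + (12 * (cp + ct) / ct) / real m"
proof -
  define e where "e = (real m * real m - 1) / 3"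
  have m2r: "2 \<le> real m" using m2 by simp
  have mm: "4 \<le> real m * real m" using mult_mono[OF m2r m2r] by simp
  have epos: "0 < e" unfolding e_def using mm by simp
  have A: "ct * e \<le> exp_opt_cost cp ct m"
    unfolding e_def using exp_opt_cost_ge cp ct m2 by simp
  have Apos: "0 < exp_opt_cost cp ct m" using A epos ct by (meson less_le_trans mult_pos_pos)
  have le: "exp_opt_cost cp ct m \<le> exp_sweep_cost cp ct m"
    using exp_opt_cost_le_exp_sweep_cost cp ct by simp
  then show "1 \<le> exp_sweep_cost cp ct m / exp_opt_cost cp ct m" using Apos by simp
  have "exp_sweep_cost cp ct m / exp_opt_cost cp ct m \<le> exp_sweep_cost cp ct m / (ct * e)"
    by (rule divide_left_mono[OF A]) (use Apos le epos ct in simp_all)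
  also have "\<dots> \<le> (2 * real m * cp + ct * (e + 2 * real m)) / (ct * e)"
    by (rule divide_right_mono) (use exp_sweep_cost_le cp ct m2 epos in \<open>simp_all add: e_def\<close>)
  also have "\<dots> = 1 + ((cp + ct) / ct) * (2 * real m / e)"
    using epos ct by (simp add: field_simps)
  also have "\<dots> \<le> 1 + ((cp + ct) / ct) * (12 / real m)"
  proof -
    have "2 * real m / e \<le> 12 / real m"
      unfolding e_def using mm m2r by (simp add: field_simps)
    moreover have "0 \<le> (cp + ct) / ct" using cp ct by simp
    ultimately show ?thesis by (simp only: add_le_cancel_left mult_left_mono)
  qed
  also have "\<dots> = 1 + (12 * (cp + ct) / ct) / real m" by simp
  finally show "exp_sweep_cost cp ct m / exp_opt_cost cp ct m \<le> 1 + (12 * (cp + ct) / ct) / real m" .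
qed

theorem corollary1:
  fixes cp ct :: real
  assumes "cp > 0" and "ct > 0"
  shows "((\<lambda>m. exp_sweep_cost cp ct m / exp_opt_cost cp ct m) \<longlonglongrightarrow> 1) \<and>
         (\<forall>m \<pi>. \<pi> permutes {1..m} \<longrightarrow>
           valid_plan m \<pi> (opt_plan \<pi> m) \<and>
           (\<forall>ps. valid_plan m \<pi> ps \<longrightarrow> cost cp ct (opt_plan \<pi> m) \<le> cost cp ct ps))"
proof (intro conjI allI impI)
  show "(\<lambda>m. exp_sweep_cost cp ct m / exp_opt_cost cp ct m) \<longlonglongrightarrow> 1"
  proof (rule tendsto_sandwich[where f="\<lambda>_. 1" and h="\<lambda>m. 1 + (12 * (cp + ct) / ct) / real m"])
    show "\<forall>\<^sub>F m in sequentially. 1 \<le> exp_sweep_cost cp ct m / exp_opt_cost cp ct m"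
      unfolding eventually_sequentially using ratio_bounds(1)[OF assms] by blast
    show "\<forall>\<^sub>F m in sequentially.
        exp_sweep_cost cp ct m / exp_opt_cost cp ct m \<le> 1 + (12 * (cp + ct) / ct) / real m"
      unfolding eventually_sequentially using ratio_bounds(2)[OF assms] by blast
    have "(\<lambda>m. 1 + (12 * (cp + ct) / ct) / real m) \<longlonglongrightarrow> 1 + 0"
      by (intro tendsto_add tendsto_const lim_const_over_n)
    then show "(\<lambda>m. 1 + (12 * (cp + ct) / ct) / real m) \<longlonglongrightarrow> 1" by simp
  qed simp
next
  fix m :: nat and \<pi> :: "nat \<Rightarrow> nat" assume "\<pi> permutes {1..m}"
  then interpret lor \<pi> m by unfold_locales
  show "valid_plan m \<pi> (opt_plan \<pi> m)" by (rule valid_opt_plan)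
  show "cost cp ct (opt_plan \<pi> m) \<le> cost cp ct ps" if "valid_plan m \<pi> ps" for ps
    using opt_plan_optimal[OF _ _ that] assms by simp
qed

end
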